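(* Let $\Omega\subset\mathbb{R}^3$ be open, let $x\in\Omega$ and $0<r<\operatorname{dist}(x,\partial\Omega)$. Let $u\in C^2(\Omega)^3$ satisfy $\nabla\cdot u=0$, let $v\in\mathbb{R}^3$, and let $p$ be a (classical) solution of $-\Delta p=\nabla\cdot(u\cdot\nabla u)$ in $\Omega$. Then $$p(x)+\tfrac13|u(x)-v|^2=\overline{p}(x,r)+\fint_{|\xi|=1}\big|\xi\cdot(u(x+r\xi)-v)\big|^2dS(\xi)+\int_0^r\frac{d\rho}{\rho}\fint_{|\xi|=1}\Big[3\big|\xi\cdot(u(x+\rho\xi)-v)\big|^2-|u(x+\rho\xi)-v|^2\Big]dS(\xi).$$
   Context: For a function $f$, $\overline{f}(x,r)=\frac{1}{4\pi r^2}\int_{|x-y|=r}f(y)\,dS(y)=\fint_{|\xi|=1}f(x+r\xi)\,dS(\xi)$ denotes the spherical average, where $\fint$ denotes the integral over the unit sphere divided by its area $4\pi$. *)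

theory Defs
  imports "HOL-Analysis.Analysis"
begin

definition partial :: "3 \<Rightarrow> (real^3 \<Rightarrow> real) \<Rightarrow> real^3 \<Rightarrow> real" where
  "partial i f y = deriv (\<lambda>t. f (y + t *\<^sub>R axis i 1)) 0"

definition C2_on :: "(real^3) set \<Rightarrow> (real^3 \<Rightarrow> real) \<Rightarrow> bool" where
  "C2_on S f \<longleftrightarrow>
     continuous_on S f \<and>
     (\<forall>i. \<forall>y\<in>S. (\<lambda>t. f (y + t *\<^sub>R axis i 1)) differentiable (at 0)) \<and>
     (\<forall>i. continuous_on S (partial i f)) \<and>
     (\<forall>i j. \<forall>y\<in>S. (\<lambda>t. partial i f (y + t *\<^sub>R axis j 1)) differentiable (at 0)) \<and>
     (\<forall>i j. continuous_on S (partial j (partial i f)))"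

definition laplacian :: "(real^3 \<Rightarrow> real) \<Rightarrow> real^3 \<Rightarrow> real" where
  "laplacian f y = (\<Sum>i\<in>UNIV. partial i (partial i f) y)"

definition divergence :: "(real^3 \<Rightarrow> real^3) \<Rightarrow> real^3 \<Rightarrow> real" where
  "divergence u y = (\<Sum>i\<in>UNIV. partial i (\<lambda>z. u z $ i) y)"

definition convective :: "(real^3 \<Rightarrow> real^3) \<Rightarrow> real^3 \<Rightarrow> real^3" where
  "convective u y = (\<chi> i. \<Sum>j\<in>UNIV. u y $ j * partial j (\<lambda>z. u z $ i) y)"

definition sph :: "real \<Rightarrow> real \<Rightarrow> real^3" where
  "sph th ph = vector [sin th * cos ph, sin th * sin ph, cos th]"

text \<open>Average over the unit sphere S^2 with respect to surface measure, divided by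
  its area 4 pi, computed via the spherical-coordinate parametrisation
  (surface element sin th dth dph).\<close>
definition sphere_avg :: "(real^3 \<Rightarrow> real) \<Rightarrow> real" where
  "sphere_avg g = (integral {0..2*pi} (\<lambda>ph. integral {0..pi} (\<lambda>th. g (sph th ph) * sin th))) / (4*pi)"

definition sph_mean :: "(real^3 \<Rightarrow> real) \<Rightarrow> real^3 \<Rightarrow> real \<Rightarrow> real" where
  "sph_mean f x r = sphere_avg (\<lambda>\<xi>. f (x + r *\<^sub>R \<xi>))"

end

(*
  Write w = u - v, and let P(s), A(s), C(s), D(s) be the averages over xi in the unit sphere of
  p, (xi . w)^2, |w|^2 and xi . (u . grad) u at the point x + s xi.  Gauss's theorem on spheres,
  d/ds (s^2 * avg (xi . F)) = s^2 * avg (div F), is used twice.  For the divergence-free field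
  grad p + (u . grad) u it gives P' = -D.  For the field ((y - x) . w) u - (v . (y - x)) w, whose
  normal component on the sphere of radius s is s (xi . w)^2 and whose divergence is
  |w|^2 + (y - x) . (u . grad) u because div u = 0, it gives (s^3 A)' = s^2 (C + s D).  Hence
  (P + A)' = (C - 3 A) / s, and integrating from 0 to r with P(0) = p(x), A(0) = |w(x)|^2 / 3
  yields the identity.
*)

theory Submission
  imports Defs
begin

section \<open>Continuous partial derivatives\<close>

lemma has_real_derivative_partial:
  assumes "(\<lambda>t. f (z + t *\<^sub>R axis i 1)) differentiable (at 0)"
  shows "((\<lambda>t. f (z + t *\<^sub>R axis i 1)) has_real_derivative partial i f z) (at 0)"
  using assms unfolding partial_def by (simp add: DERIV_deriv_iff_real_differentiable)

lemma has_real_derivative_partial_shifted: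
  assumes "(\<lambda>t. f ((z + s *\<^sub>R axis i 1) + t *\<^sub>R axis i 1)) differentiable (at 0)"
  shows "((\<lambda>t. f (z + t *\<^sub>R axis i 1)) has_real_derivative partial i f (z + s *\<^sub>R axis i 1)) (at s)"
proof -
  have "((\<lambda>t. f (z + (t + s) *\<^sub>R axis i 1)) has_real_derivative partial i f (z + s *\<^sub>R axis i 1)) (at 0)"
    using has_real_derivative_partial[OF assms] by (simp add: scaleR_add_left add_ac)
  then show ?thesis
    using DERIV_shift[where z=s and x=0 and f="\<lambda>t. f (z + t *\<^sub>R axis i 1)"] by simp
qed

definition grad :: "(real^3 \<Rightarrow> real) \<Rightarrow> real^3 \<Rightarrow> real^3" where
  "grad f y = (\<chi> i. partial i f y)"

lemma grad_component [simp]: "grad f y $ i = partial i f y"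
  by (simp add: grad_def)

lemma grad_eq_of_has_derivative:
  assumes "(g has_derivative (\<lambda>h. a \<bullet> h)) (at y)"
  shows "grad g y = a"
proof -
  have "partial j g y = a $ j" for j
  proof -
    have "((\<lambda>t. y + t *\<^sub>R axis j 1) has_derivative (\<lambda>t. t *\<^sub>R axis j 1)) (at 0)"
      by (auto intro!: derivative_eq_intros)
    moreover have "(g has_derivative (\<lambda>h. a \<bullet> h)) (at (y + 0 *\<^sub>R axis j 1))"
      using assms by simp
    ultimately have "((\<lambda>t. g (y + t *\<^sub>R axis j 1)) has_derivative (\<lambda>t. a \<bullet> (t *\<^sub>R axis j 1))) (at 0)"
      by (rule has_derivative_compose)
    moreover have "(\<lambda>t. a \<bullet> (t *\<^sub>R axis j 1)) = (*) (a $ j)"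
      by (auto simp: inner_axis mult.commute)
    ultimately have "((\<lambda>t. g (y + t *\<^sub>R axis j 1)) has_real_derivative a $ j) (at 0)"
      by (simp add: has_field_derivative_def)
    then show ?thesis unfolding partial_def by (rule DERIV_imp_deriv)
  qed
  then show ?thesis by (simp add: grad_def vec_eq_iff)
qed

lemma coordinate_increment_bound:
  assumes dif: "\<And>z. z \<in> B \<Longrightarrow> (\<lambda>t. f (z + t *\<^sub>R axis i 1)) differentiable (at 0)"
    and bnd: "\<And>z. z \<in> B \<Longrightarrow> \<bar>partial i f z - P\<bar> \<le> e"
    and seg: "\<And>t. t \<in> closed_segment 0 c \<Longrightarrow> z + t *\<^sub>R axis i 1 \<in> B"
  shows "\<bar>f (z + c *\<^sub>R axis i 1) - f z - c * P\<bar> \<le> e * \<bar>c\<bar>"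
proof -
  let ?g = "\<lambda>t. f (z + t *\<^sub>R axis i 1) - t * P"
  have "norm (?g c - ?g 0) \<le> e * norm (c - 0)"
  proof (rule field_differentiable_bound[where S="closed_segment 0 c"
        and f'="\<lambda>t. partial i f (z + t *\<^sub>R axis i 1) - P"])
    fix t assume t: "t \<in> closed_segment (0::real) c"
    have "((\<lambda>t. f (z + t *\<^sub>R axis i 1)) has_real_derivative partial i f (z + t *\<^sub>R axis i 1)) (at t)"
      by (rule has_real_derivative_partial_shifted) (use dif seg t in blast)
    then have "(?g has_field_derivative partial i f (z + t *\<^sub>R axis i 1) - P) (at t)"
      by (auto intro!: derivative_eq_intros)
    then show "(?g has_field_derivative partial i f (z + t *\<^sub>R axis i 1) - P) (at t within closed_segment 0 c)"
      by (rule has_field_derivative_at_within)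
    show "norm (partial i f (z + t *\<^sub>R axis i 1) - P) \<le> e"
      using bnd seg t by auto
  qed auto
  then show ?thesis by (simp add: algebra_simps)
qed

lemma coordinate_step_bound:
  assumes dif: "\<And>i z. z \<in> ball y d \<Longrightarrow> (\<lambda>t. f (z + t *\<^sub>R axis i 1)) differentiable (at 0)"
    and bnd: "\<And>i z. z \<in> ball y d \<Longrightarrow> \<bar>partial i f z - partial i f y\<bar> \<le> e"
    and z: "norm (z - y) + \<bar>c\<bar> < d"
  shows "\<bar>f (z + c *\<^sub>R axis i 1) - f z - c * partial i f y\<bar> \<le> e * \<bar>c\<bar>"
proof (rule coordinate_increment_bound[OF dif bnd])
  fix t assume "t \<in> closed_segment 0 c"
  then have "\<bar>t\<bar> \<le> \<bar>c\<bar>" by (auto simp: closed_segment_eq_real_ivl split: if_splits)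
  moreover have "norm (z + t *\<^sub>R axis i 1 - y) \<le> norm (z - y) + \<bar>t\<bar>"
    using norm_triangle_ineq[of "z - y" "t *\<^sub>R axis i 1"] by (simp add: algebra_simps)
  ultimately show "z + t *\<^sub>R axis i 1 \<in> ball y d"
    using z by (simp add: dist_norm norm_minus_commute)
qed

lemma increment_bound_by_partials:
  assumes dif: "\<And>i z. z \<in> ball y d \<Longrightarrow> (\<lambda>t. f (z + t *\<^sub>R axis i 1)) differentiable (at 0)"
    and bnd: "\<And>i z. z \<in> ball y d \<Longrightarrow> \<bar>partial i f z - partial i f y\<bar> \<le> e"
    and h: "norm h < d / 3"
  shows "\<bar>f (y + h) - f y - grad f y \<bullet> h\<bar> \<le> 3 * e * norm h"
proof -
  have hn: "\<bar>h $ i\<bar> \<le> norm h" for i by (rule component_le_norm_cart)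
  have small: "\<bar>h $ 1\<bar> + \<bar>h $ 2\<bar> + \<bar>h $ 3\<bar> < d"
    using hn[of 1] hn[of 2] hn[of 3] h by linarith
  define z1 where "z1 = y + (h $ 1) *\<^sub>R axis 1 1"
  define z2 where "z2 = z1 + (h $ 2) *\<^sub>R axis 2 1"
  have "norm (z2 - y) \<le> \<bar>h $ 1\<bar> + \<bar>h $ 2\<bar>"
    using norm_triangle_ineq[of "h $ 1 *\<^sub>R axis (1::3) (1::real)" "h $ 2 *\<^sub>R axis (2::3) 1"]
    by (simp add: z1_def z2_def)
  then have n3: "norm (z2 - y) + \<bar>h $ 3\<bar> < d" using small by linarith
  have n1: "norm (y - y) + \<bar>h $ 1\<bar> < d" and n2: "norm (z1 - y) + \<bar>h $ 2\<bar> < d"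
    using small abs_ge_zero[of "h $ 2"] abs_ge_zero[of "h $ 3"] by (simp_all add: z1_def)
  have z3: "z2 + (h $ 3) *\<^sub>R axis 3 1 = y + h"
    unfolding z2_def z1_def by (simp add: vec_eq_iff forall_3 axis_def)
  have "\<bar>f z1 - f y - h $ 1 * partial 1 f y\<bar> \<le> e * \<bar>h $ 1\<bar>"
    unfolding z1_def by (rule coordinate_step_bound[OF dif bnd n1])
  moreover have "\<bar>f z2 - f z1 - h $ 2 * partial 2 f y\<bar> \<le> e * \<bar>h $ 2\<bar>"
    unfolding z2_def by (rule coordinate_step_bound[OF dif bnd n2])
  moreover have "\<bar>f (y + h) - f z2 - h $ 3 * partial 3 f y\<bar> \<le> e * \<bar>h $ 3\<bar>"
    unfolding z3[symmetric] by (rule coordinate_step_bound[OF dif bnd n3])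
  moreover have "grad f y \<bullet> h = h $ 1 * partial 1 f y + h $ 2 * partial 2 f y + h $ 3 * partial 3 f y"
    by (simp add: inner_vec_def sum_3 mult.commute)
  ultimately have "\<bar>f (y + h) - f y - grad f y \<bullet> h\<bar> \<le> e * \<bar>h $ 1\<bar> + e * \<bar>h $ 2\<bar> + e * \<bar>h $ 3\<bar>"
    by linarith
  also have "\<dots> \<le> e * norm h + e * norm h + e * norm h"
    using hn[of 1] hn[of 2] hn[of 3] order_trans[OF abs_ge_zero bnd[of y 1]] h
    by (intro add_mono mult_left_mono) auto
  finally show ?thesis by simp
qed
lemma has_derivative_of_continuous_partials:
  assumes S: "open S" "y \<in> S"
    and dif: "\<And>i z. z \<in> S \<Longrightarrow> (\<lambda>t. f (z + t *\<^sub>R axis i 1)) differentiable (at 0)"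
    and cont: "\<And>i. continuous_on S (partial i f)"
  shows "(f has_derivative (\<lambda>h. grad f y \<bullet> h)) (at y)"
  unfolding has_derivative_at_alt
proof (intro conjI allI impI)
  show "bounded_linear ((\<bullet>) (grad f y))" by (rule bounded_linear_inner_right)
  fix e :: real assume e: "e > 0"
  have "\<exists>d>0. \<forall>z\<in>S. dist z y < d \<longrightarrow> dist (partial i f z) (partial i f y) < e / 3" for i
    using cont[of i] S(2) \<open>e > 0\<close> unfolding continuous_on_iff by (metis divide_pos_pos zero_less_numeral)
  then obtain dd where dd: "\<And>i. dd i > 0"
    "\<And>i z. z \<in> S \<Longrightarrow> dist z y < dd i \<Longrightarrow> dist (partial i f z) (partial i f y) < e / 3"
    by metis
  obtain d0 where d0: "d0 > 0" "ball y d0 \<subseteq> S" using S open_contains_ball by blast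
  define d where "d = min d0 (Min (range dd))"
  have "Min (range dd) \<le> dd i" for i by (rule Min_le) auto
  moreover have "Min (range dd) > 0" using dd(1) by (simp add: Min_gr_iff)
  ultimately have d: "d > 0" "d \<le> d0" "\<And>i. d \<le> dd i"
    using d0 unfolding d_def by (auto simp: min_le_iff_disj)
  then have "ball y d \<subseteq> S" using d0 by auto
  then have bnd: "\<bar>partial i f z - partial i f y\<bar> \<le> e / 3" if "z \<in> ball y d" for i z
    using dd(2)[of z i] d(3)[of i] that by (auto simp: dist_real_def dist_commute)
  show "\<exists>d>0. \<forall>y'. norm (y' - y) < d \<longrightarrow>
          norm (f y' - f y - grad f y \<bullet> (y' - y)) \<le> e * norm (y' - y)"
  proof (intro exI[of _ "d / 3"] conjI allI impI)
    fix y' assume "norm (y' - y) < d / 3"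
    have "\<And>i z. z \<in> ball y d \<Longrightarrow> (\<lambda>t. f (z + t *\<^sub>R axis i 1)) differentiable (at 0)"
      using dif \<open>ball y d \<subseteq> S\<close> by blast
    from increment_bound_by_partials[OF this bnd \<open>norm (y' - y) < d / 3\<close>]
    show "norm (f y' - f y - grad f y \<bullet> (y' - y)) \<le> e * norm (y' - y)"
      by simp
  qed (use d in simp)
qed

lemma has_derivative_component_diff:
  "((\<lambda>y. (y - x) $ k) has_derivative (\<lambda>h. axis k 1 \<bullet> h)) (at y)"
proof -
  have "((\<lambda>y. (y - x) \<bullet> axis k 1) has_derivative (\<lambda>h. (h - 0) \<bullet> axis k 1)) (at y)"
    by (intro has_derivative_inner_left has_derivative_diff has_derivative_ident has_derivative_const)
  moreover have "(\<lambda>y. (y - x) $ k) = (\<lambda>y. (y - x) \<bullet> axis k 1)" by (simp add: inner_axis)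
  ultimately show ?thesis by (simp add: inner_commute)
qed

lemma C2_on_imp_continuous_on: "C2_on S f \<Longrightarrow> continuous_on S f"
  unfolding C2_on_def by blast

lemma C2_on_imp_continuous_on_partial: "C2_on S f \<Longrightarrow> continuous_on S (partial i f)"
  unfolding C2_on_def by blast

lemma C2_on_has_derivative:
  "open S \<Longrightarrow> C2_on S f \<Longrightarrow> y \<in> S \<Longrightarrow> (f has_derivative (\<lambda>h. grad f y \<bullet> h)) (at y)"
  by (rule has_derivative_of_continuous_partials) (auto simp: C2_on_def)

lemma C2_on_partial_has_derivative:
  "open S \<Longrightarrow> C2_on S f \<Longrightarrow> y \<in> S \<Longrightarrow>
     (partial i f has_derivative (\<lambda>h. grad (partial i f) y \<bullet> h)) (at y)"
  by (rule has_derivative_of_continuous_partials) (auto simp: C2_on_def)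

lemma C2_on_continuous_on_grad: "C2_on S f \<Longrightarrow> continuous_on S (grad f)"
  unfolding grad_def C2_on_def by (intro continuous_on_vec_lambda) auto

lemma C2_on_continuous_on_grad_partial: "C2_on S f \<Longrightarrow> continuous_on S (grad (partial i f))"
  unfolding grad_def C2_on_def by (intro continuous_on_vec_lambda) auto

section \<open>Spherical coordinates\<close>

lemma sph_component [simp]:
  "sph th ph $ 1 = sin th * cos ph" "sph th ph $ 2 = sin th * sin ph" "sph th ph $ 3 = cos th"
  unfolding sph_def by simp_all

lemma vector_3_eq_axis_sum:
  "(vector [a, b, c] :: real^3) = a *\<^sub>R axis 1 1 + b *\<^sub>R axis 2 1 + c *\<^sub>R axis 3 1"
  by (simp add: vec_eq_iff forall_3 axis_def)

lemma inner_3: "a \<bullet> (b :: real^3) = a $ 1 * b $ 1 + a $ 2 * b $ 2 + a $ 3 * b $ 3"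
  by (simp add: inner_vec_def sum_3)

lemma norm_sph [simp]: "norm (sph th ph) = 1"
proof -
  have "sph th ph \<bullet> sph th ph = 1"
    unfolding inner_3 sph_component
    using sin_cos_squared_add[of th] sin_cos_squared_add[of ph] by algebra
  then show ?thesis by (simp add: norm_eq_sqrt_inner)
qed

lemma continuous_on_sph [continuous_intros]:
  fixes f g :: "'a::metric_space \<Rightarrow> real"
  assumes "continuous_on S f" "continuous_on S g"
  shows "continuous_on S (\<lambda>x. sph (f x) (g x))"
  unfolding sph_def vector_3_eq_axis_sum using assms by (intro continuous_intros)

definition sph_e_theta :: "real \<Rightarrow> real \<Rightarrow> real^3" where
  "sph_e_theta th ph = vector [cos th * cos ph, cos th * sin ph, - sin th]"

definition sph_e_phi :: "real \<Rightarrow> real^3" where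
  "sph_e_phi ph = vector [- sin ph, cos ph, 0]"

lemma sph_e_theta_component [simp]:
  "sph_e_theta th ph $ 1 = cos th * cos ph" "sph_e_theta th ph $ 2 = cos th * sin ph"
  "sph_e_theta th ph $ 3 = - sin th"
  unfolding sph_e_theta_def by simp_all

lemma sph_e_phi_component [simp]:
  "sph_e_phi ph $ 1 = - sin ph" "sph_e_phi ph $ 2 = cos ph" "sph_e_phi ph $ 3 = 0"
  unfolding sph_e_phi_def by simp_all

lemma continuous_on_sph_e_phi [continuous_intros]:
  fixes f :: "'a::metric_space \<Rightarrow> real"
  shows "continuous_on T f \<Longrightarrow> continuous_on T (\<lambda>t. sph_e_phi (f t))"
  unfolding sph_e_phi_def vector_3_eq_axis_sum by (intro continuous_intros)

lemma sph_has_vector_derivative_theta: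
  "((\<lambda>th. sph th ph) has_vector_derivative sph_e_theta th ph) (at th)"
  unfolding sph_def sph_e_theta_def vector_3_eq_axis_sum
  by (auto intro!: derivative_eq_intros simp: algebra_simps)

lemma sph_has_vector_derivative_phi:
  "((\<lambda>ph. sph th ph) has_vector_derivative sin th *\<^sub>R sph_e_phi ph) (at ph)"
  unfolding sph_def sph_e_phi_def vector_3_eq_axis_sum
  by (auto intro!: derivative_eq_intros simp: algebra_simps)

lemma has_real_derivative_along_path:
  fixes g :: "real^3 \<Rightarrow> real"
  assumes "(g has_derivative (\<lambda>h. a \<bullet> h)) (at (\<gamma> t))"
    and "(\<gamma> has_vector_derivative d) (at t)"
  shows "((\<lambda>t. g (\<gamma> t)) has_real_derivative a \<bullet> d) (at t)"
proof -
  have "(\<gamma> has_derivative (\<lambda>s. s *\<^sub>R d)) (at t)"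
    using assms(2) by (simp add: has_vector_derivative_def)
  from has_derivative_compose[OF this assms(1)]
  have "((\<lambda>t. g (\<gamma> t)) has_derivative (\<lambda>s. a \<bullet> (s *\<^sub>R d))) (at t)" .
  moreover have "(\<lambda>s. a \<bullet> (s *\<^sub>R d)) = (*) (a \<bullet> d)" by (auto simp: mult.commute)
  ultimately show ?thesis by (simp add: has_field_derivative_def)
qed

section \<open>Averages over the unit sphere\<close>

lemma continuous_on_sph_chart:
  assumes "continuous_on (sphere 0 1) g"
  shows "continuous_on T (\<lambda>t. g (sph (snd t) (fst t)) * sin (snd t))"
proof -
  have "continuous_on T (\<lambda>t. g (sph (snd t) (fst t)))"
    by (rule continuous_on_compose2[OF assms]) (auto intro!: continuous_intros)
  then show ?thesis by (intro continuous_intros)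
qed

lemma sphere_avg_eq_integral_chart:
  assumes "continuous_on (sphere 0 1) g"
  shows "sphere_avg g = integral (cbox (0,0) (2*pi, pi)) (\<lambda>t. g (sph (snd t) (fst t)) * sin (snd t)) / (4*pi)"
  unfolding sphere_avg_def integral_prod_continuous[OF continuous_on_sph_chart[OF assms]]
  by (simp add: cbox_interval)

lemma sphere_avg_cong:
  "(\<And>\<xi>. \<xi> \<in> sphere 0 1 \<Longrightarrow> g \<xi> = g' \<xi>) \<Longrightarrow> sphere_avg g = sphere_avg g'"
  unfolding sphere_avg_def by (intro arg_cong[where f="\<lambda>x. x / (4*pi)"] integral_cong) simp

lemma sphere_avg_cmult: "sphere_avg (\<lambda>\<xi>. c * g \<xi>) = c * sphere_avg g"
  unfolding sphere_avg_def by (simp add: mult.assoc)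

lemma sphere_avg_add:
  assumes "continuous_on (sphere 0 1) g1" "continuous_on (sphere 0 1) g2"
  shows "sphere_avg (\<lambda>\<xi>. g1 \<xi> + g2 \<xi>) = sphere_avg g1 + sphere_avg g2"
proof -
  have int: "(\<lambda>t. g (sph (snd t) (fst t)) * sin (snd t)) integrable_on cbox (0,0) (2*pi, pi)"
    if "continuous_on (sphere 0 1) g" for g
    by (rule integrable_continuous[OF continuous_on_sph_chart[OF that]])
  have "continuous_on (sphere 0 1) (\<lambda>\<xi>. g1 \<xi> + g2 \<xi>)"
    using assms by (intro continuous_intros)
  note sum = sphere_avg_eq_integral_chart[OF this]
  show ?thesis
    unfolding sphere_avg_eq_integral_chart[OF assms(1)] sphere_avg_eq_integral_chart[OF assms(2)] sum
    using integral_add[OF int[OF assms(1)] int[OF assms(2)]]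
    by (simp add: distrib_right add_divide_distrib)
qed

lemma sphere_avg_diff:
  assumes "continuous_on (sphere 0 1) g1" "continuous_on (sphere 0 1) g2"
  shows "sphere_avg (\<lambda>\<xi>. g1 \<xi> - g2 \<xi>) = sphere_avg g1 - sphere_avg g2"
  using sphere_avg_add[OF assms(1), of "\<lambda>\<xi>. (-1) * g2 \<xi>"] sphere_avg_cmult[of "-1" g2] assms(2)
  by (simp add: continuous_on_minus)

lemma sphere_avg_const [simp]: "sphere_avg (\<lambda>\<xi>. c) = c"
proof -
  have "((\<lambda>th. c * sin th) has_integral (- c * cos pi) - (- c * cos 0)) {0..pi}"
    by (rule fundamental_theorem_of_calculus)
       (auto simp: has_real_derivative_iff_has_vector_derivative[symmetric] intro!: derivative_eq_intros)
  then show ?thesis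
    unfolding sphere_avg_def by (simp add: integral_unique)
qed

lemma integral_sph_inner_square_theta:
  fixes a :: "real^3"
  shows "((\<lambda>th. (sph th ph \<bullet> a)\<^sup>2 * sin th) has_integral
     (4/3) * (a$1 * cos ph + a$2 * sin ph)\<^sup>2 + (2/3) * (a$3)\<^sup>2) {0..pi}"
proof -
  define K where "K = (a$1 * cos ph + a$2 * sin ph)\<^sup>2"
  define P where "P = (\<lambda>th. K * (- cos th + (cos th)^3 / 3) - (a$3)\<^sup>2 * (cos th)^3 / 3
    + 2 * a$3 * (a$1 * cos ph + a$2 * sin ph) * (sin th)^3 / 3)"
  have "(P has_real_derivative (sph th ph \<bullet> a)\<^sup>2 * sin th) (at th)" for th
  proof -
    have "(P has_real_derivative K * (sin th - (cos th)\<^sup>2 * sin th) + (a$3)\<^sup>2 * (cos th)\<^sup>2 * sin th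
        + 2 * a$3 * (a$1 * cos ph + a$2 * sin ph) * (sin th)\<^sup>2 * cos th) (at th)"
      unfolding P_def
      by (auto intro!: derivative_eq_intros simp: power2_eq_square power3_eq_cube algebra_simps)
    moreover have "K * (sin th - (cos th)\<^sup>2 * sin th) + (a$3)\<^sup>2 * (cos th)\<^sup>2 * sin th
        + 2 * a$3 * (a$1 * cos ph + a$2 * sin ph) * (sin th)\<^sup>2 * cos th = (sph th ph \<bullet> a)\<^sup>2 * sin th"
      unfolding K_def inner_3 sph_component using sin_cos_squared_add[of th] by algebra
    ultimately show ?thesis by simp
  qed
  then have "((\<lambda>th. (sph th ph \<bullet> a)\<^sup>2 * sin th) has_integral P pi - P 0) {0..pi}"
    by (intro fundamental_theorem_of_calculus)
       (auto simp: has_real_derivative_iff_has_vector_derivative[symmetric] intro: has_field_derivative_at_within)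
  moreover have "P pi - P 0 = (4/3) * K + (2/3) * (a$3)\<^sup>2"
    unfolding P_def by (simp add: power3_eq_cube algebra_simps)
  ultimately show ?thesis by (simp add: K_def)
qed

lemma integral_sph_inner_square_phi:
  fixes a :: "real^3"
  shows "((\<lambda>ph. (4/3) * (a$1 * cos ph + a$2 * sin ph)\<^sup>2 + (2/3) * (a$3)\<^sup>2) has_integral
     (4*pi/3) * (norm a)\<^sup>2) {0..2*pi}"
proof -
  define Q where "Q = (\<lambda>ph. (4/3) * ((a$1)\<^sup>2 * (ph/2 + sin ph * cos ph / 2)
    + (a$2)\<^sup>2 * (ph/2 - sin ph * cos ph / 2) + a$1 * a$2 * (sin ph)\<^sup>2) + (2/3) * (a$3)\<^sup>2 * ph)"
  have "(Q has_real_derivative (4/3) * (a$1 * cos ph + a$2 * sin ph)\<^sup>2 + (2/3) * (a$3)\<^sup>2) (at ph)" for ph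
  proof -
    have "(Q has_real_derivative (4/3) * ((a$1)\<^sup>2 * (1/2 + ((cos ph)\<^sup>2 - (sin ph)\<^sup>2)/2)
        + (a$2)\<^sup>2 * (1/2 - ((cos ph)\<^sup>2 - (sin ph)\<^sup>2)/2) + a$1 * a$2 * (2 * sin ph * cos ph))
        + (2/3) * (a$3)\<^sup>2) (at ph)"
      unfolding Q_def by (auto intro!: derivative_eq_intros simp: power2_eq_square algebra_simps) algebra
    moreover have "(4/3) * ((a$1)\<^sup>2 * (1/2 + ((cos ph)\<^sup>2 - (sin ph)\<^sup>2)/2)
        + (a$2)\<^sup>2 * (1/2 - ((cos ph)\<^sup>2 - (sin ph)\<^sup>2)/2) + a$1 * a$2 * (2 * sin ph * cos ph))
        + (2/3) * (a$3)\<^sup>2 = (4/3) * (a$1 * cos ph + a$2 * sin ph)\<^sup>2 + (2/3) * (a$3)\<^sup>2"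
      using sin_cos_squared_add[of ph] by algebra
    ultimately show ?thesis by (rule DERIV_cong)
  qed
  then have "((\<lambda>ph. (4/3) * (a$1 * cos ph + a$2 * sin ph)\<^sup>2 + (2/3) * (a$3)\<^sup>2) has_integral
      Q (2*pi) - Q 0) {0..2*pi}"
    by (intro fundamental_theorem_of_calculus)
       (auto simp: has_real_derivative_iff_has_vector_derivative[symmetric] intro: has_field_derivative_at_within)
  moreover have "Q (2*pi) - Q 0 = (4*pi/3) * (norm a)\<^sup>2"
    unfolding Q_def power2_norm_eq_inner inner_3 by (simp add: power2_eq_square algebra_simps)
  ultimately show ?thesis by simp
qed

lemma sphere_avg_inner_square: "sphere_avg (\<lambda>\<xi>. (\<xi> \<bullet> a)\<^sup>2) = (norm a)\<^sup>2 / 3"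
  unfolding sphere_avg_def integral_unique[OF integral_sph_inner_square_theta]
    integral_unique[OF integral_sph_inner_square_phi]
  by simp

lemma sphere_point_mem:
  fixes x :: "'a::real_normed_vector"
  assumes "ball x R \<subseteq> S" "\<bar>s\<bar> < R" "\<xi> \<in> sphere 0 1"
  shows "x + s *\<^sub>R \<xi> \<in> S"
proof -
  have "norm \<xi> = 1" using assms(3) by simp
  then have "x + s *\<^sub>R \<xi> \<in> ball x R" using assms(2) by (simp add: dist_norm)
  then show ?thesis using assms(1) by blast
qed

lemma continuous_on_sphere_shell:
  fixes x :: "'a::real_normed_vector"
  assumes "continuous_on S f" "\<And>\<xi>. \<xi> \<in> sphere 0 1 \<Longrightarrow> x + s *\<^sub>R \<xi> \<in> S"
  shows "continuous_on (sphere 0 1) (\<lambda>\<xi>. f (x + s *\<^sub>R \<xi>))"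
proof (rule continuous_on_compose2[OF assms(1)])
  show "continuous_on (sphere 0 1) (\<lambda>\<xi>. x + s *\<^sub>R \<xi>)" by (intro continuous_intros)
  show "(\<lambda>\<xi>. x + s *\<^sub>R \<xi>) ` sphere 0 1 \<subseteq> S" by (intro image_subsetI assms(2))
qed

lemma continuous_on_Times_snd:
  "continuous_on S f \<Longrightarrow> continuous_on (A \<times> S) (\<lambda>z. f (snd z))"
  by (rule continuous_on_compose2[OF _ continuous_on_snd[OF continuous_on_id]]) auto

lemma sphere_avg_has_derivative:
  assumes U: "convex U" "r0 \<in> U"
    and d: "\<And>r \<xi>. r \<in> U \<Longrightarrow> \<xi> \<in> sphere 0 1 \<Longrightarrow>
              ((\<lambda>r. h r \<xi>) has_real_derivative h' r \<xi>) (at r within U)"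
    and c': "continuous_on (U \<times> sphere 0 1) (\<lambda>(r, \<xi>). h' r \<xi>)"
    and c: "\<And>r. r \<in> U \<Longrightarrow> continuous_on (sphere 0 1) (h r)"
  shows "((\<lambda>r. sphere_avg (h r)) has_real_derivative sphere_avg (h' r0)) (at r0 within U)"
proof -
  let ?D = "cbox (0,0) (2*pi, pi) :: (real \<times> real) set"
  define f where "f = (\<lambda>r t. h r (sph (snd t) (fst t)) * sin (snd t))"
  define fx where "fx = (\<lambda>r t. h' r (sph (snd t) (fst t)) * sin (snd t))"
  have "continuous_on (U \<times> ?D) (\<lambda>z. (fst z, sph (snd (snd z)) (fst (snd z))))"
    by (intro continuous_intros)
  moreover have "(\<lambda>z. (fst z, sph (snd (snd z)) (fst (snd z)))) ` (U \<times> ?D) \<subseteq> U \<times> sphere 0 1"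
    by auto
  ultimately have "continuous_on (U \<times> ?D) (\<lambda>z. (\<lambda>(r, \<xi>). h' r \<xi>) (fst z, sph (snd (snd z)) (fst (snd z))))"
    by (rule continuous_on_compose2[OF c'])
  then have cfx: "continuous_on (U \<times> ?D) (\<lambda>(r, t). fx r t)"
    unfolding fx_def split_beta by (intro continuous_intros) simp
  have int: "f r integrable_on ?D" if "r \<in> U" for r
    unfolding f_def by (rule integrable_continuous[OF continuous_on_sph_chart[OF c[OF that]]])
  have "((\<lambda>r. f r t) has_real_derivative fx r t) (at r within U)" if "r \<in> U" for r t
  proof -
    have "((\<lambda>r. h r (sph (snd t) (fst t))) has_real_derivative h' r (sph (snd t) (fst t))) (at r within U)"
      by (rule d[OF that]) simp
    then show ?thesis unfolding f_def fx_def by (rule DERIV_cmult_right)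
  qed
  from leibniz_rule_field_derivative[OF this int cfx U(2,1)]
  have D: "((\<lambda>r. integral ?D (f r) / (4*pi)) has_real_derivative integral ?D (fx r0) / (4*pi))
      (at r0 within U)"
    by (rule DERIV_cdivide)
  have "continuous_on (sphere 0 1) (\<lambda>\<xi>::real^3. (r0, \<xi>))"
    by (rule continuous_on_Pair[OF continuous_on_const continuous_on_id])
  moreover have "(\<lambda>\<xi>. (r0, \<xi>)) ` sphere 0 1 \<subseteq> U \<times> sphere 0 1"
    using U(2) by auto
  ultimately have "continuous_on (sphere 0 1) (\<lambda>\<xi>. (\<lambda>(r, \<xi>). h' r \<xi>) (r0, \<xi>))"
    by (rule continuous_on_compose2[OF c'])
  then have "continuous_on (sphere 0 1) (h' r0)" by simp
  then have "sphere_avg (h' r0) = integral ?D (fx r0) / (4*pi)"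
    unfolding fx_def by (rule sphere_avg_eq_integral_chart)
  moreover have "integral ?D (f r) / (4*pi) = sphere_avg (h r)" if "r \<in> U" "dist r r0 < 1" for r
    unfolding f_def using sphere_avg_eq_integral_chart[OF c[OF that(1)]] by simp
  then have "((\<lambda>r. sphere_avg (h r)) has_real_derivative integral ?D (fx r0) / (4*pi)) (at r0 within U)"
    by (rule has_field_derivative_transform_within[OF D zero_less_one U(2)])
  ultimately show ?thesis by simp
qed

lemma sphere_avg_radial_has_derivative:
  fixes f :: "real^3 \<Rightarrow> real^3 \<Rightarrow> real" and Df :: "real^3 \<Rightarrow> real^3 \<Rightarrow> real^3"
  assumes ball: "ball x R \<subseteq> S" and s: "\<bar>s\<bar> < R"
    and deriv: "\<And>\<xi> y. \<xi> \<in> sphere 0 1 \<Longrightarrow> y \<in> S \<Longrightarrow> (f \<xi> has_derivative (\<lambda>h. Df \<xi> y \<bullet> h)) (at y)"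
    and cont_f: "continuous_on (sphere 0 1 \<times> S) (\<lambda>(\<xi>, y). f \<xi> y)"
    and cont_Df: "continuous_on (sphere 0 1 \<times> S) (\<lambda>(\<xi>, y). Df \<xi> y)"
  shows "((\<lambda>s. sphere_avg (\<lambda>\<xi>. f \<xi> (x + s *\<^sub>R \<xi>))) has_real_derivative
           sphere_avg (\<lambda>\<xi>. Df \<xi> (x + s *\<^sub>R \<xi>) \<bullet> \<xi>)) (at s)"
proof -
  define U where "U = {-R<..<R}"
  have inS: "x + t *\<^sub>R \<xi> \<in> S" if "t \<in> U" "\<xi> \<in> sphere 0 1" for t \<xi>
    using that by (intro sphere_point_mem[OF ball]) (simp_all add: U_def abs_less_iff)
  have "((\<lambda>s. sphere_avg (\<lambda>\<xi>. f \<xi> (x + s *\<^sub>R \<xi>))) has_real_derivative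
           sphere_avg (\<lambda>\<xi>. Df \<xi> (x + s *\<^sub>R \<xi>) \<bullet> \<xi>)) (at s within U)"
  proof (rule sphere_avg_has_derivative[where h="\<lambda>s \<xi>. f \<xi> (x + s *\<^sub>R \<xi>)"
        and h'="\<lambda>s \<xi>. Df \<xi> (x + s *\<^sub>R \<xi>) \<bullet> \<xi>"])
    show "convex U" "s \<in> U" using s by (auto simp: U_def)
  next
    fix t \<xi> assume "t \<in> U" "\<xi> \<in> (sphere 0 1 :: (real^3) set)"
    have "((\<lambda>t. x + t *\<^sub>R \<xi>) has_vector_derivative \<xi>) (at t)"
      by (auto intro!: derivative_eq_intros)
    with deriv[OF \<open>\<xi> \<in> sphere 0 1\<close> inS[OF \<open>t \<in> U\<close> \<open>\<xi> \<in> sphere 0 1\<close>]]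
    have "((\<lambda>t. f \<xi> (x + t *\<^sub>R \<xi>)) has_real_derivative Df \<xi> (x + t *\<^sub>R \<xi>) \<bullet> \<xi>) (at t)"
      by (rule has_real_derivative_along_path)
    then show "((\<lambda>t. f \<xi> (x + t *\<^sub>R \<xi>)) has_real_derivative Df \<xi> (x + t *\<^sub>R \<xi>) \<bullet> \<xi>) (at t within U)"
      by (rule has_field_derivative_at_within)
  next
    have "continuous_on (U \<times> sphere 0 1) (\<lambda>z. (snd z, x + fst z *\<^sub>R snd z))"
      by (intro continuous_intros)
    moreover have "(\<lambda>z. (snd z, x + fst z *\<^sub>R snd z)) ` (U \<times> sphere 0 1) \<subseteq> sphere 0 1 \<times> S"
    proof (rule image_subsetI)
      fix z :: "real \<times> (real^3)" assume "z \<in> U \<times> sphere 0 1"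
      with inS[of "fst z" "snd z"] show "(snd z, x + fst z *\<^sub>R snd z) \<in> sphere 0 1 \<times> S"
        by (simp add: mem_Times_iff)
    qed
    ultimately have "continuous_on (U \<times> sphere 0 1) (\<lambda>z. (\<lambda>(\<xi>, y). Df \<xi> y) (snd z, x + fst z *\<^sub>R snd z))"
      by (rule continuous_on_compose2[OF cont_Df])
    from continuous_on_inner[OF this continuous_on_snd[OF continuous_on_id]]
    show "continuous_on (U \<times> sphere 0 1) (\<lambda>(t, \<xi>). Df \<xi> (x + t *\<^sub>R \<xi>) \<bullet> \<xi>)"
      by (simp add: split_beta)
  next
    fix t assume "t \<in> U"
    have "continuous_on (sphere 0 1) (\<lambda>\<xi>::real^3. (\<xi>, x + t *\<^sub>R \<xi>))"
      by (intro continuous_intros)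
    moreover have "(\<lambda>\<xi>. (\<xi>, x + t *\<^sub>R \<xi>)) ` sphere 0 1 \<subseteq> sphere 0 1 \<times> S"
      using inS[OF \<open>t \<in> U\<close>] by (intro image_subsetI) simp
    ultimately have "continuous_on (sphere 0 1) (\<lambda>\<xi>. (\<lambda>(\<xi>, y). f \<xi> y) (\<xi>, x + t *\<^sub>R \<xi>))"
      by (rule continuous_on_compose2[OF cont_f])
    then show "continuous_on (sphere 0 1) (\<lambda>\<xi>. f \<xi> (x + t *\<^sub>R \<xi>))" by simp
  qed
  moreover have "at s within U = at s"
    using s by (intro at_within_open) (auto simp: U_def)
  ultimately show ?thesis by simp
qed

text \<open>Stokes' theorem on the unit sphere, written in the chart \<open>sph\<close>.\<close>

lemma sphere_avg_eq_0_if_exact: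
  assumes split: "\<And>th ph. g (sph th ph) * sin th = Pt th ph + Pp th ph"
    and dA: "\<And>th ph. ((\<lambda>th. A th ph) has_real_derivative Pt th ph) (at th)"
    and dB: "\<And>th ph. ((\<lambda>ph. B th ph) has_real_derivative Pp th ph) (at ph)"
    and poles: "\<And>ph. A pi ph = A 0 ph"
    and periodic: "\<And>th. B th (2*pi) = B th 0"
    and cont: "continuous_on (cbox (0,0) (2*pi, pi)) (\<lambda>(ph, th). Pp th ph)"
  shows "sphere_avg g = 0"
proof -
  have intT: "((\<lambda>th. Pt th ph) has_integral 0) {0..pi}" for ph
  proof -
    have "((\<lambda>th. Pt th ph) has_integral A pi ph - A 0 ph) {0..pi}"
      by (rule fundamental_theorem_of_calculus)
         (auto simp: has_real_derivative_iff_has_vector_derivative[symmetric]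
               intro!: has_field_derivative_at_within dA)
    then show ?thesis by (simp add: poles)
  qed
  have intP: "((\<lambda>ph. Pp th ph) has_integral 0) {0..2*pi}" for th
  proof -
    have "((\<lambda>ph. Pp th ph) has_integral B th (2*pi) - B th 0) {0..2*pi}"
      by (rule fundamental_theorem_of_calculus)
         (auto simp: has_real_derivative_iff_has_vector_derivative[symmetric]
               intro!: has_field_derivative_at_within dB)
    then show ?thesis by (simp add: periodic)
  qed
  have intPp: "(\<lambda>th. Pp th ph) integrable_on {0..pi}" if "ph \<in> {0..2*pi}" for ph
  proof -
    have "continuous_on {0..pi} (\<lambda>th. (\<lambda>(ph, th). Pp th ph) (ph, th))"
      by (rule continuous_on_compose2[OF cont]) (use that in \<open>auto intro!: continuous_intros\<close>)
    then show ?thesis by (simp add: integrable_continuous_real)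
  qed
  have "integral {0..2*pi} (\<lambda>ph. integral {0..pi} (\<lambda>th. g (sph th ph) * sin th))
      = integral {0..2*pi} (\<lambda>ph. integral {0..pi} (\<lambda>th. Pp th ph))"
  proof (rule integral_cong)
    fix ph assume ph: "ph \<in> {0..2*pi}"
    have "integral {0..pi} (\<lambda>th. g (sph th ph) * sin th)
        = integral {0..pi} (\<lambda>th. Pt th ph) + integral {0..pi} (\<lambda>th. Pp th ph)"
      unfolding split by (rule integral_add[OF has_integral_integrable[OF intT] intPp[OF ph]])
    then show "integral {0..pi} (\<lambda>th. g (sph th ph) * sin th) = integral {0..pi} (\<lambda>th. Pp th ph)"
      using integral_unique[OF intT] by simp
  qed
  also have "\<dots> = integral {0..pi} (\<lambda>th. integral {0..2*pi} (\<lambda>ph. Pp th ph))"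
    using integral_swap_continuous[where f="\<lambda>ph th. Pp th ph" and a=0 and c=0 and b="2*pi" and d=pi] cont
    by (simp add: cbox_interval)
  also have "\<dots> = 0" using integral_unique[OF intP] by simp
  finally show ?thesis unfolding sphere_avg_def by simp
qed

lemma divergence_eq_sum_grad: "divergence F y = (\<Sum>k\<in>UNIV. grad (\<lambda>y. F y $ k) y $ k)"
  by (simp add: divergence_def)

section \<open>Gauss's theorem on spheres\<close>

locale C1_field =
  fixes S :: "(real^3) set" and F :: "real^3 \<Rightarrow> real^3"
  assumes has_derivative_component:
      "\<And>k y. y \<in> S \<Longrightarrow> ((\<lambda>y. F y $ k) has_derivative (\<lambda>h. grad (\<lambda>y. F y $ k) y \<bullet> h)) (at y)"
    and continuous_on_grad_component: "\<And>k. continuous_on S (grad (\<lambda>y. F y $ k))"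

lemma C1_fieldI:
  assumes "\<And>k y. y \<in> S \<Longrightarrow> ((\<lambda>y. F y $ k) has_derivative (\<lambda>h. G k y \<bullet> h)) (at y)"
    and "\<And>k. continuous_on S (G k)"
  shows "C1_field S F"
proof
  have grad: "grad (\<lambda>y. F y $ k) y = G k y" if "y \<in> S" for k y
    using assms(1)[OF that] by (rule grad_eq_of_has_derivative)
  show "((\<lambda>y. F y $ k) has_derivative (\<lambda>h. grad (\<lambda>y. F y $ k) y \<bullet> h)) (at y)" if "y \<in> S" for k y
    using assms(1)[OF that] by (simp add: grad[OF that])
  show "continuous_on S (grad (\<lambda>y. F y $ k))" for k
    using assms(2) by (rule continuous_on_eq) (simp add: grad)
qed

context C1_field
begin

abbreviation DF :: "3 \<Rightarrow> real^3 \<Rightarrow> real^3" where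
  "DF k \<equiv> grad (\<lambda>y. F y $ k)"

lemma continuous_on_field: "continuous_on S F"
proof -
  have "continuous_on S (\<lambda>y. F y $ k)" for k
  proof (rule continuous_at_imp_continuous_on, rule ballI)
    fix y assume "y \<in> S"
    show "isCont (\<lambda>y. F y $ k) y" by (rule has_derivative_continuous[OF has_derivative_component[OF \<open>y \<in> S\<close>]])
  qed
  then have "continuous_on S (\<lambda>y. \<chi> k. F y $ k)" by (intro continuous_on_vec_lambda allI)
  then show ?thesis by simp
qed

lemma sphere_avg_normal_has_derivative:
  assumes "ball x R \<subseteq> S" "\<bar>s\<bar> < R"
  shows "((\<lambda>s. sphere_avg (\<lambda>\<xi>. \<xi> \<bullet> F (x + s *\<^sub>R \<xi>))) has_real_derivative
           sphere_avg (\<lambda>\<xi>. \<Sum>k\<in>UNIV. \<xi> $ k * (DF k (x + s *\<^sub>R \<xi>) \<bullet> \<xi>))) (at s)"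
proof -
  have "((\<lambda>s. sphere_avg (\<lambda>\<xi>. \<xi> \<bullet> F (x + s *\<^sub>R \<xi>))) has_real_derivative
           sphere_avg (\<lambda>\<xi>. (\<Sum>k\<in>UNIV. \<xi> $ k *\<^sub>R DF k (x + s *\<^sub>R \<xi>)) \<bullet> \<xi>)) (at s)"
  proof (rule sphere_avg_radial_has_derivative[OF assms, where f="\<lambda>\<xi> y. \<xi> \<bullet> F y"
        and Df="\<lambda>\<xi> y. \<Sum>k\<in>UNIV. \<xi> $ k *\<^sub>R DF k y"])
    fix \<xi> y :: "real^3" assume "y \<in> S"
    have "((\<lambda>y. \<Sum>k\<in>UNIV. \<xi> $ k * F y $ k) has_derivative (\<lambda>h. \<Sum>k\<in>UNIV. \<xi> $ k * (DF k y \<bullet> h))) (at y)"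
      by (intro has_derivative_sum has_derivative_mult_right has_derivative_component \<open>y \<in> S\<close>)
    moreover have "(\<lambda>y. \<xi> \<bullet> F y) = (\<lambda>y. \<Sum>k\<in>UNIV. \<xi> $ k * F y $ k)"
      by (simp add: inner_vec_def)
    moreover have "(\<lambda>h. \<Sum>k\<in>UNIV. \<xi> $ k * (DF k y \<bullet> h)) = (\<lambda>h. (\<Sum>k\<in>UNIV. \<xi> $ k *\<^sub>R DF k y) \<bullet> h)"
      by (simp add: inner_sum_left)
    ultimately show "((\<lambda>y. \<xi> \<bullet> F y) has_derivative (\<lambda>h. (\<Sum>k\<in>UNIV. \<xi> $ k *\<^sub>R DF k y) \<bullet> h)) (at y)"
      by simp
  next
    from continuous_on_inner[OF continuous_on_fst[OF continuous_on_id]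
        continuous_on_Times_snd[OF continuous_on_field]]
    show "continuous_on (sphere 0 1 \<times> S) (\<lambda>(\<xi>, y). \<xi> \<bullet> F y)"
      by (simp add: split_beta)
  next
    have "continuous_on (sphere 0 1 \<times> S) (\<lambda>z. DF k (snd z))" for k
      by (rule continuous_on_Times_snd[OF continuous_on_grad_component])
    then have "continuous_on (sphere 0 1 \<times> S) (\<lambda>z. \<Sum>k\<in>UNIV. fst z $ k *\<^sub>R DF k (snd z))"
      by (intro continuous_on_sum continuous_on_scaleR continuous_on_component
          continuous_on_fst continuous_on_id)
    then show "continuous_on (sphere 0 1 \<times> S) (\<lambda>(\<xi>, y). \<Sum>k\<in>UNIV. \<xi> $ k *\<^sub>R DF k y)"
      by (simp add: split_beta)
  qed
  then show ?thesis by (simp add: inner_sum_left)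
qed

lemma
  assumes inS: "\<And>\<xi>. \<xi> \<in> sphere 0 1 \<Longrightarrow> x + r *\<^sub>R \<xi> \<in> S"
  shows component_sph_has_derivative_theta:
      "((\<lambda>th. F (x + r *\<^sub>R sph th ph) $ k) has_real_derivative
         DF k (x + r *\<^sub>R sph th ph) \<bullet> (r *\<^sub>R sph_e_theta th ph)) (at th)"
    and component_sph_has_derivative_phi:
      "((\<lambda>ph. F (x + r *\<^sub>R sph th ph) $ k) has_real_derivative
         DF k (x + r *\<^sub>R sph th ph) \<bullet> (r *\<^sub>R (sin th *\<^sub>R sph_e_phi ph))) (at ph)"
proof -
  have S: "x + r *\<^sub>R sph th ph \<in> S" using inS by simp
  have "((\<lambda>th. x + r *\<^sub>R sph th ph) has_vector_derivative r *\<^sub>R sph_e_theta th ph) (at th)"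
    using sph_has_vector_derivative_theta by (auto intro!: derivative_eq_intros)
  from has_real_derivative_along_path[where \<gamma>="\<lambda>th. x + r *\<^sub>R sph th ph",
      OF has_derivative_component[OF S] this]
  show "((\<lambda>th. F (x + r *\<^sub>R sph th ph) $ k) has_real_derivative
      DF k (x + r *\<^sub>R sph th ph) \<bullet> (r *\<^sub>R sph_e_theta th ph)) (at th)" .
  have "((\<lambda>ph. x + r *\<^sub>R sph th ph) has_vector_derivative r *\<^sub>R (sin th *\<^sub>R sph_e_phi ph)) (at ph)"
    using sph_has_vector_derivative_phi by (auto intro!: derivative_eq_intros)
  from has_real_derivative_along_path[where \<gamma>="\<lambda>ph. x + r *\<^sub>R sph th ph",
      OF has_derivative_component[OF S] this]
  show "((\<lambda>ph. F (x + r *\<^sub>R sph th ph) $ k) has_real_derivative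
      DF k (x + r *\<^sub>R sph th ph) \<bullet> (r *\<^sub>R (sin th *\<^sub>R sph_e_phi ph))) (at ph)" .
qed

lemma
  fixes T :: "(real \<times> real) set"
  assumes inS: "\<And>\<xi>. \<xi> \<in> sphere 0 1 \<Longrightarrow> x + r *\<^sub>R \<xi> \<in> S"
  shows continuous_on_field_sph: "continuous_on T (\<lambda>z. F (x + r *\<^sub>R sph (snd z) (fst z)))"
    and continuous_on_grad_component_sph: "continuous_on T (\<lambda>z. DF k (x + r *\<^sub>R sph (snd z) (fst z)))"
proof -
  have cp: "continuous_on T (\<lambda>z. x + r *\<^sub>R sph (snd z) (fst z))"
    by (intro continuous_intros)
  have img: "(\<lambda>z. x + r *\<^sub>R sph (snd z) (fst z)) ` T \<subseteq> S"
    using inS by (intro image_subsetI) simp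
  show "continuous_on T (\<lambda>z. F (x + r *\<^sub>R sph (snd z) (fst z)))"
    by (rule continuous_on_compose2[OF continuous_on_field cp img])
  show "continuous_on T (\<lambda>z. DF k (x + r *\<^sub>R sph (snd z) (fst z)))"
    by (rule continuous_on_compose2[OF continuous_on_grad_component cp img])
qed

text \<open>On the sphere of radius \<open>r\<close>, \<open>div F - \<xi> \<bullet> (DF \<xi>)\<close> is the surface divergence
  of \<open>F\<close>, whose integral is the mean curvature \<open>2 / r\<close> times the flux. In the chart
  \<open>sph\<close> the integrand splits into a \<open>\<theta>\<close>-derivative of \<open>sin \<theta> (e\<^sub>\<theta> \<bullet> F)\<close> and a
  \<open>\<phi>\<close>-derivative of \<open>e\<^sub>\<phi> \<bullet> F\<close>.\<close>

lemma sphere_avg_surface_divergence_eq_0: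
  assumes inS: "\<And>\<xi>. \<xi> \<in> sphere 0 1 \<Longrightarrow> x + r *\<^sub>R \<xi> \<in> S"
  shows "sphere_avg (\<lambda>\<xi>. r * (\<Sum>k\<in>UNIV. DF k (x + r *\<^sub>R \<xi>) $ k) - 2 * (\<xi> \<bullet> F (x + r *\<^sub>R \<xi>))
           - r * (\<Sum>k\<in>UNIV. \<xi> $ k * (DF k (x + r *\<^sub>R \<xi>) \<bullet> \<xi>))) = 0"
proof -
  define p where "p = (\<lambda>th ph. x + r *\<^sub>R sph th ph)"
  define Fc where "Fc = (\<lambda>k th ph. F (p th ph) $ k)"
  define Dt where "Dt = (\<lambda>k th ph. DF k (p th ph) \<bullet> (r *\<^sub>R sph_e_theta th ph))"
  define Dp where "Dp = (\<lambda>k th ph. DF k (p th ph) \<bullet> (r *\<^sub>R (sin th *\<^sub>R sph_e_phi ph)))"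
  have dt: "((\<lambda>th. Fc k th ph) has_real_derivative Dt k th ph) (at th)" for k th ph
    unfolding Fc_def Dt_def p_def by (rule component_sph_has_derivative_theta[OF inS])
  have dp: "((\<lambda>ph. Fc k th ph) has_real_derivative Dp k th ph) (at ph)" for k th ph
    unfolding Fc_def Dp_def p_def by (rule component_sph_has_derivative_phi[OF inS])
  define At where "At = (\<lambda>th ph. sin th * (cos th * cos ph * Fc 1 th ph + cos th * sin ph * Fc 2 th ph
    - sin th * Fc 3 th ph))"
  define Pt where "Pt = (\<lambda>th ph. cos th * (cos th * cos ph * Fc 1 th ph + cos th * sin ph * Fc 2 th ph
    - sin th * Fc 3 th ph) + sin th * (- sin th * cos ph * Fc 1 th ph + cos th * cos ph * Dt 1 th ph
    - sin th * sin ph * Fc 2 th ph + cos th * sin ph * Dt 2 th ph - cos th * Fc 3 th ph - sin th * Dt 3 th ph))"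
  define Bp where "Bp = (\<lambda>th ph. - sin ph * Fc 1 th ph + cos ph * Fc 2 th ph)"
  define Pp where "Pp = (\<lambda>th ph. - cos ph * Fc 1 th ph - sin ph * Dp 1 th ph - sin ph * Fc 2 th ph
    + cos ph * Dp 2 th ph)"
  show ?thesis
  proof (rule sphere_avg_eq_0_if_exact[where Pt=Pt and Pp=Pp and A=At and B=Bp])
    fix th ph
    show "((\<lambda>th. At th ph) has_real_derivative Pt th ph) (at th)"
      unfolding At_def Pt_def by (auto intro!: derivative_eq_intros dt simp: algebra_simps)
    show "((\<lambda>ph. Bp th ph) has_real_derivative Pp th ph) (at ph)"
      unfolding Bp_def Pp_def by (auto intro!: derivative_eq_intros dp simp: algebra_simps)
    show "At pi ph = At 0 ph" by (simp add: At_def)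
    have "p th (2*pi) = p th 0" by (simp add: p_def sph_def)
    then show "Bp th (2*pi) = Bp th 0" by (simp add: Bp_def Fc_def)
    have t1: "(sin th)\<^sup>2 + (cos th)\<^sup>2 = 1" and t2: "(sin ph)\<^sup>2 + (cos ph)\<^sup>2 = 1" by simp_all
    show "(r * (\<Sum>k\<in>UNIV. DF k (x + r *\<^sub>R sph th ph) $ k) - 2 * (sph th ph \<bullet> F (x + r *\<^sub>R sph th ph))
        - r * (\<Sum>k\<in>UNIV. sph th ph $ k * (DF k (x + r *\<^sub>R sph th ph) \<bullet> sph th ph))) * sin th
        = Pt th ph + Pp th ph"
      unfolding Pt_def Pp_def Dt_def Dp_def Fc_def p_def
      apply (simp only: inner_3 sum_3 sph_component sph_e_theta_component sph_e_phi_component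
          vector_scaleR_component real_scaleR_def)
      using t1 t2 by algebra
  next
    have "continuous_on (cbox (0,0) (2*pi, pi)) (\<lambda>z. F (p (snd z) (fst z)))"
      unfolding p_def by (rule continuous_on_field_sph[OF inS])
    moreover have "continuous_on (cbox (0,0) (2*pi, pi)) (\<lambda>z. DF k (p (snd z) (fst z)))" for k
      unfolding p_def by (rule continuous_on_grad_component_sph[OF inS])
    ultimately have "continuous_on (cbox (0,0) (2*pi, pi)) (\<lambda>z. Pp (snd z) (fst z))"
      unfolding Pp_def Fc_def Dp_def by (intro continuous_intros)
    then show "continuous_on (cbox (0,0) (2*pi, pi)) (\<lambda>(ph, th). Pp th ph)"
      by (simp add: split_beta)
  qed
qed

lemma flux_has_derivative:
  assumes ball: "ball x R \<subseteq> S" and s: "\<bar>s\<bar> < R"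
  shows "((\<lambda>s. s\<^sup>2 * sphere_avg (\<lambda>\<xi>. \<xi> \<bullet> F (x + s *\<^sub>R \<xi>))) has_real_derivative
           s\<^sup>2 * sphere_avg (\<lambda>\<xi>. divergence F (x + s *\<^sub>R \<xi>))) (at s)"
proof -
  have inS: "\<And>\<xi>. \<xi> \<in> sphere 0 1 \<Longrightarrow> x + s *\<^sub>R \<xi> \<in> S"
    using sphere_point_mem[OF ball s] .
  define A1 where "A1 = (\<lambda>\<xi>. \<Sum>k\<in>UNIV. DF k (x + s *\<^sub>R \<xi>) $ k)"
  define A2 where "A2 = (\<lambda>\<xi>::real^3. \<xi> \<bullet> F (x + s *\<^sub>R \<xi>))"
  define A3 where "A3 = (\<lambda>\<xi>. \<Sum>k\<in>UNIV. \<xi> $ k * (DF k (x + s *\<^sub>R \<xi>) \<bullet> \<xi>))"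
  have cDF: "continuous_on (sphere 0 1) (\<lambda>\<xi>. DF k (x + s *\<^sub>R \<xi>))" for k
    by (rule continuous_on_sphere_shell[OF continuous_on_grad_component inS])
  have cF: "continuous_on (sphere 0 1) (\<lambda>\<xi>. F (x + s *\<^sub>R \<xi>))"
    by (rule continuous_on_sphere_shell[OF continuous_on_field inS])
  have c1: "continuous_on (sphere 0 1) (\<lambda>\<xi>. s * A1 \<xi>)"
    unfolding A1_def using cDF by (intro continuous_intros)
  have c2: "continuous_on (sphere 0 1) (\<lambda>\<xi>. 2 * A2 \<xi>)"
    unfolding A2_def using cF by (intro continuous_intros)
  have c3: "continuous_on (sphere 0 1) (\<lambda>\<xi>. s * A3 \<xi>)"
    unfolding A3_def using cDF by (intro continuous_intros)
  have "0 = sphere_avg (\<lambda>\<xi>. s * A1 \<xi> - 2 * A2 \<xi> - s * A3 \<xi>)"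
    using sphere_avg_surface_divergence_eq_0[OF inS] unfolding A1_def A2_def A3_def by simp
  also have "\<dots> = s * sphere_avg A1 - 2 * sphere_avg A2 - s * sphere_avg A3"
    using c1 c2 c3 by (simp add: sphere_avg_diff continuous_on_diff sphere_avg_cmult)
  finally have lin: "s * sphere_avg A1 = 2 * sphere_avg A2 + s * sphere_avg A3" by simp
  have "((\<lambda>s. s\<^sup>2) has_real_derivative 2 * s) (at s)"
    by (auto intro!: derivative_eq_intros)
  from DERIV_mult[OF this sphere_avg_normal_has_derivative[OF ball s]]
  have "((\<lambda>s. s\<^sup>2 * sphere_avg (\<lambda>\<xi>. \<xi> \<bullet> F (x + s *\<^sub>R \<xi>))) has_real_derivative
      s * (2 * sphere_avg A2 + s * sphere_avg A3)) (at s)"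
    unfolding A2_def A3_def by (simp add: power2_eq_square algebra_simps)
  then show ?thesis
    unfolding lin[symmetric] A1_def divergence_eq_sum_grad by (simp add: power2_eq_square algebra_simps)
qed

lemma flux_eq_0_if_divergence_free:
  assumes div0: "\<And>y. y \<in> S \<Longrightarrow> divergence F y = 0"
    and ball: "ball x R \<subseteq> S" and s: "\<bar>s\<bar> < R" "s \<noteq> 0"
  shows "sphere_avg (\<lambda>\<xi>. \<xi> \<bullet> F (x + s *\<^sub>R \<xi>)) = 0"
proof -
  define U where "U = {-R<..<R}"
  have "\<exists>c. \<forall>t\<in>U. t\<^sup>2 * sphere_avg (\<lambda>\<xi>. \<xi> \<bullet> F (x + t *\<^sub>R \<xi>)) = c"
  proof (rule has_field_derivative_zero_constant)
    fix t assume "t \<in> U"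
    then have t: "\<bar>t\<bar> < R" by (simp add: U_def abs_less_iff)
    have "sphere_avg (\<lambda>\<xi>. divergence F (x + t *\<^sub>R \<xi>)) = sphere_avg (\<lambda>\<xi>. 0)"
      by (rule sphere_avg_cong) (simp add: div0 sphere_point_mem[OF ball t])
    with flux_has_derivative[OF ball t]
    show "((\<lambda>t. t\<^sup>2 * sphere_avg (\<lambda>\<xi>. \<xi> \<bullet> F (x + t *\<^sub>R \<xi>))) has_real_derivative 0) (at t within U)"
      by (auto intro: has_field_derivative_at_within)
  qed (simp add: U_def)
  then obtain c where c: "\<And>t. t \<in> U \<Longrightarrow> t\<^sup>2 * sphere_avg (\<lambda>\<xi>. \<xi> \<bullet> F (x + t *\<^sub>R \<xi>)) = c"
    by blast
  have "0 \<in> U" "s \<in> U" using s by (auto simp: U_def abs_less_iff)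
  from c[OF this(1)] c[OF this(2)] s(2) show ?thesis by simp
qed

end

lemma C1_field_grad: "open S \<Longrightarrow> C2_on S p \<Longrightarrow> C1_field S (grad p)"
  by unfold_locales
    (simp_all add: C2_on_partial_has_derivative C2_on_continuous_on_grad_partial)

lemma divergence_grad: "divergence (grad p) y = laplacian p y"
  by (simp add: divergence_def laplacian_def)

lemma C1_field_add:
  assumes "C1_field S F" "C1_field S G"
  shows "C1_field S (\<lambda>y. F y + G y)"
proof (rule C1_fieldI[where G="\<lambda>k y. grad (\<lambda>y. F y $ k) y + grad (\<lambda>y. G y $ k) y"])
  fix k y assume "y \<in> S"
  with C1_field.has_derivative_component[OF assms(1)] C1_field.has_derivative_component[OF assms(2)]
  show "((\<lambda>y. (F y + G y) $ k) has_derivative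
          (\<lambda>h. (grad (\<lambda>y. F y $ k) y + grad (\<lambda>y. G y $ k) y) \<bullet> h)) (at y)"
    by (auto intro!: has_derivative_add simp: inner_add_left)
next
  fix k
  show "continuous_on S (\<lambda>y. grad (\<lambda>y. F y $ k) y + grad (\<lambda>y. G y $ k) y)"
    using C1_field.continuous_on_grad_component[OF assms(1)] C1_field.continuous_on_grad_component[OF assms(2)]
    by (intro continuous_on_add)
qed

lemma divergence_add:
  assumes "C1_field S F" "C1_field S G" "y \<in> S"
  shows "divergence (\<lambda>y. F y + G y) y = divergence F y + divergence G y"
proof -
  have "((\<lambda>y. (F y + G y) $ k) has_derivative
          (\<lambda>h. (grad (\<lambda>y. F y $ k) y + grad (\<lambda>y. G y $ k) y) \<bullet> h)) (at y)" for k
    using C1_field.has_derivative_component[OF assms(1,3)] C1_field.has_derivative_component[OF assms(2,3)]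
    by (auto intro!: has_derivative_add simp: inner_add_left)
  then have "grad (\<lambda>y. (F y + G y) $ k) y = grad (\<lambda>y. F y $ k) y + grad (\<lambda>y. G y $ k) y" for k
    by (rule grad_eq_of_has_derivative)
  then show ?thesis by (simp add: divergence_eq_sum_grad sum.distrib)
qed

section \<open>The pressure identity\<close>

definition energy_flux :: "(real^3 \<Rightarrow> real^3) \<Rightarrow> real^3 \<Rightarrow> real^3 \<Rightarrow> real^3 \<Rightarrow> real^3" where
  "energy_flux u x v y = ((y - x) \<bullet> (u y - v)) *\<^sub>R u y - (v \<bullet> (y - x)) *\<^sub>R (u y - v)"

lemma inner_energy_flux_sphere:
  "\<xi> \<bullet> energy_flux u x v (x + s *\<^sub>R \<xi>) = s * (\<xi> \<bullet> (u (x + s *\<^sub>R \<xi>) - v))\<^sup>2"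
proof -
  define a where "a = \<xi> \<bullet> u (x + s *\<^sub>R \<xi>)"
  define b where "b = \<xi> \<bullet> v"
  have "\<xi> \<bullet> energy_flux u x v (x + s *\<^sub>R \<xi>) = (s * (a - b)) * a - (s * b) * (a - b)"
    unfolding a_def b_def energy_flux_def
    by (simp add: inner_diff_right inner_commute[of v \<xi>] right_diff_distrib)
  also have "\<dots> = s * (a - b)\<^sup>2" by (simp add: power2_eq_square algebra_simps)
  finally show ?thesis unfolding a_def b_def by (simp add: inner_diff_right)
qed

definition mean_normal_energy :: "(real^3 \<Rightarrow> real^3) \<Rightarrow> real^3 \<Rightarrow> real^3 \<Rightarrow> real \<Rightarrow> real" where
  "mean_normal_energy u x v s = sphere_avg (\<lambda>\<xi>. (\<xi> \<bullet> (u (x + s *\<^sub>R \<xi>) - v))\<^sup>2)"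

definition mean_energy :: "(real^3 \<Rightarrow> real^3) \<Rightarrow> real^3 \<Rightarrow> real^3 \<Rightarrow> real \<Rightarrow> real" where
  "mean_energy u x v s = sphere_avg (\<lambda>\<xi>. (norm (u (x + s *\<^sub>R \<xi>) - v))\<^sup>2)"

definition mean_normal_convection :: "(real^3 \<Rightarrow> real^3) \<Rightarrow> real^3 \<Rightarrow> real \<Rightarrow> real" where
  "mean_normal_convection u x s = sphere_avg (\<lambda>\<xi>. \<xi> \<bullet> convective u (x + s *\<^sub>R \<xi>))"

locale pressure_poisson =
  fixes \<Omega> :: "(real^3) set" and u :: "real^3 \<Rightarrow> real^3" and p :: "real^3 \<Rightarrow> real"
  assumes open_domain: "open \<Omega>"
    and velocity_C2: "\<And>k. C2_on \<Omega> (\<lambda>y. u y $ k)"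
    and divergence_free: "\<And>y. y \<in> \<Omega> \<Longrightarrow> divergence u y = 0"
    and pressure_C2: "C2_on \<Omega> p"
    and poisson: "\<And>y. y \<in> \<Omega> \<Longrightarrow> - laplacian p y = divergence (convective u) y"
begin

lemma velocity_has_derivative:
  "y \<in> \<Omega> \<Longrightarrow> ((\<lambda>y. u y $ k) has_derivative (\<lambda>h. grad (\<lambda>y. u y $ k) y \<bullet> h)) (at y)"
  by (rule C2_on_has_derivative[OF open_domain velocity_C2])

lemma continuous_on_velocity: "continuous_on \<Omega> u"
proof -
  have "continuous_on \<Omega> (\<lambda>y. \<chi> k. u y $ k)"
    by (intro continuous_on_vec_lambda allI C2_on_imp_continuous_on velocity_C2)
  then show ?thesis by simp
qed

lemma C1_field_convective: "C1_field \<Omega> (convective u)"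
proof -
  define G where "G = (\<lambda>j y. \<Sum>i\<in>UNIV. u y $ i *\<^sub>R grad (partial i (\<lambda>z. u z $ j)) y
    + partial i (\<lambda>z. u z $ j) y *\<^sub>R grad (\<lambda>z. u z $ i) y)"
  show ?thesis
  proof (rule C1_fieldI[where G=G])
    fix j y assume "y \<in> \<Omega>"
    have "((\<lambda>y. \<Sum>i\<in>UNIV. u y $ i * partial i (\<lambda>z. u z $ j) y) has_derivative
        (\<lambda>h. \<Sum>i\<in>UNIV. u y $ i * (grad (partial i (\<lambda>z. u z $ j)) y \<bullet> h)
          + (grad (\<lambda>z. u z $ i) y \<bullet> h) * partial i (\<lambda>z. u z $ j) y)) (at y)"
      by (intro has_derivative_sum has_derivative_mult velocity_has_derivative
          C2_on_partial_has_derivative[OF open_domain velocity_C2] \<open>y \<in> \<Omega>\<close>)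
    moreover have "(\<lambda>h. \<Sum>i\<in>UNIV. u y $ i * (grad (partial i (\<lambda>z. u z $ j)) y \<bullet> h)
          + (grad (\<lambda>z. u z $ i) y \<bullet> h) * partial i (\<lambda>z. u z $ j) y) = (\<lambda>h. G j y \<bullet> h)"
      unfolding G_def by (auto simp: inner_sum_left inner_add_left algebra_simps)
    ultimately show "((\<lambda>y. convective u y $ j) has_derivative (\<lambda>h. G j y \<bullet> h)) (at y)"
      by (simp add: convective_def)
  next
    fix j
    have "continuous_on \<Omega> (\<lambda>y. u y $ i)" "continuous_on \<Omega> (grad (partial i (\<lambda>z. u z $ j)))"
      "continuous_on \<Omega> (partial i (\<lambda>z. u z $ j))" "continuous_on \<Omega> (grad (\<lambda>z. u z $ i))" for i
      by (simp_all add: C2_on_imp_continuous_on C2_on_continuous_on_grad_partial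
          C2_on_imp_continuous_on_partial C2_on_continuous_on_grad velocity_C2)
    with continuous_on_velocity show "continuous_on \<Omega> (G j)"
      unfolding G_def by (intro continuous_intros)
  qed
qed

lemma C1_field_pressure_force: "C1_field \<Omega> (\<lambda>y. grad p y + convective u y)"
  by (intro C1_field_add C1_field_grad open_domain pressure_C2 C1_field_convective)

lemma divergence_pressure_force:
  assumes "y \<in> \<Omega>"
  shows "divergence (\<lambda>y. grad p y + convective u y) y = 0"
proof -
  have "divergence (\<lambda>y. grad p y + convective u y) y = laplacian p y + divergence (convective u) y"
    using divergence_add[OF C1_field_grad[OF open_domain pressure_C2] C1_field_convective assms]
    by (simp add: divergence_grad)
  with poisson[OF assms] show ?thesis by simp
qed

lemma sphere_avg_normal_grad_pressure:
  assumes ball: "ball x R \<subseteq> \<Omega>" and s: "\<bar>s\<bar> < R" "s \<noteq> 0"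
  shows "sphere_avg (\<lambda>\<xi>. \<xi> \<bullet> grad p (x + s *\<^sub>R \<xi>)) = - mean_normal_convection u x s"
proof -
  have inS: "\<And>\<xi>. \<xi> \<in> sphere 0 1 \<Longrightarrow> x + s *\<^sub>R \<xi> \<in> \<Omega>"
    using sphere_point_mem[OF ball s(1)] .
  have "continuous_on (sphere 0 1) (\<lambda>\<xi>. grad p (x + s *\<^sub>R \<xi>))"
    by (rule continuous_on_sphere_shell[OF C2_on_continuous_on_grad[OF pressure_C2] inS])
  moreover have "continuous_on (sphere 0 1) (\<lambda>\<xi>. convective u (x + s *\<^sub>R \<xi>))"
    by (rule continuous_on_sphere_shell[OF C1_field.continuous_on_field[OF C1_field_convective] inS])
  ultimately have "sphere_avg (\<lambda>\<xi>. \<xi> \<bullet> (grad p (x + s *\<^sub>R \<xi>) + convective u (x + s *\<^sub>R \<xi>)))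
      = sphere_avg (\<lambda>\<xi>. \<xi> \<bullet> grad p (x + s *\<^sub>R \<xi>)) + mean_normal_convection u x s"
    unfolding mean_normal_convection_def inner_add_right
    by (intro sphere_avg_add) (auto intro!: continuous_intros)
  moreover have "sphere_avg (\<lambda>\<xi>. \<xi> \<bullet> (grad p (x + s *\<^sub>R \<xi>) + convective u (x + s *\<^sub>R \<xi>))) = 0"
    by (rule C1_field.flux_eq_0_if_divergence_free[OF C1_field_pressure_force
          divergence_pressure_force ball s])
  ultimately show ?thesis by simp
qed

lemma has_derivative_displacement_inner_velocity:
  assumes "y \<in> \<Omega>"
  shows "((\<lambda>y. (y - x) \<bullet> (u y - v)) has_derivative
           (\<lambda>h. (u y - v + (\<Sum>k\<in>UNIV. (y - x) $ k *\<^sub>R grad (\<lambda>z. u z $ k) y)) \<bullet> h)) (at y)"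
proof -
  have "((\<lambda>y. \<Sum>k\<in>UNIV. (y - x) $ k * (u y $ k - v $ k)) has_derivative
      (\<lambda>h. \<Sum>k\<in>UNIV. (y - x) $ k * (grad (\<lambda>z. u z $ k) y \<bullet> h - 0)
        + (axis k 1 \<bullet> h) * (u y $ k - v $ k))) (at y)"
    by (intro has_derivative_sum has_derivative_mult has_derivative_component_diff has_derivative_diff
        velocity_has_derivative assms has_derivative_const)
  moreover have "(\<lambda>h. \<Sum>k\<in>UNIV. (y - x) $ k * (grad (\<lambda>z. u z $ k) y \<bullet> h - 0)
        + (axis k 1 \<bullet> h) * (u y $ k - v $ k))
      = (\<lambda>h. (u y - v + (\<Sum>k\<in>UNIV. (y - x) $ k *\<^sub>R grad (\<lambda>z. u z $ k) y)) \<bullet> h)"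
    by (rule ext) (simp add: inner_add_left inner_sum_left inner_axis' sum_3 inner_3[of "u y"] inner_3[of v]
        algebra_simps)
  moreover have "(\<lambda>y. (y - x) \<bullet> (u y - v)) = (\<lambda>y. \<Sum>k\<in>UNIV. (y - x) $ k * (u y $ k - v $ k))"
    by (simp add: inner_vec_def)
  ultimately show ?thesis by simp
qed

lemma has_derivative_energy_flux:
  assumes "y \<in> \<Omega>"
  shows "((\<lambda>y. energy_flux u x v y $ i) has_derivative (\<lambda>h.
           ((u y $ i) *\<^sub>R (u y - v + (\<Sum>k\<in>UNIV. (y - x) $ k *\<^sub>R grad (\<lambda>z. u z $ k) y))
          + ((y - x) \<bullet> (u y - v)) *\<^sub>R grad (\<lambda>z. u z $ i) y - (u y $ i - v $ i) *\<^sub>R v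
          - (v \<bullet> (y - x)) *\<^sub>R grad (\<lambda>z. u z $ i) y) \<bullet> h)) (at y)"
proof -
  define a where "a = u y - v + (\<Sum>k\<in>UNIV. (y - x) $ k *\<^sub>R grad (\<lambda>z. u z $ k) y)"
  have da: "((\<lambda>y. (y - x) \<bullet> (u y - v)) has_derivative (\<lambda>h. a \<bullet> h)) (at y)"
    unfolding a_def by (rule has_derivative_displacement_inner_velocity[OF assms])
  have dv: "((\<lambda>y. v \<bullet> (y - x)) has_derivative (\<lambda>h. v \<bullet> (h - 0))) (at y)"
    by (intro has_derivative_inner_right has_derivative_diff has_derivative_ident has_derivative_const)
  have "((\<lambda>y. ((y - x) \<bullet> (u y - v)) * u y $ i - (v \<bullet> (y - x)) * (u y $ i - v $ i)) has_derivative
      (\<lambda>h. (((y - x) \<bullet> (u y - v)) * (grad (\<lambda>z. u z $ i) y \<bullet> h) + (a \<bullet> h) * u y $ i)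
        - ((v \<bullet> (y - x)) * (grad (\<lambda>z. u z $ i) y \<bullet> h - 0) + (v \<bullet> (h - 0)) * (u y $ i - v $ i)))) (at y)"
    by (intro has_derivative_diff has_derivative_mult da velocity_has_derivative dv assms has_derivative_const)
  moreover have "(\<lambda>h. (((y - x) \<bullet> (u y - v)) * (grad (\<lambda>z. u z $ i) y \<bullet> h) + (a \<bullet> h) * u y $ i)
        - ((v \<bullet> (y - x)) * (grad (\<lambda>z. u z $ i) y \<bullet> h - 0) + (v \<bullet> (h - 0)) * (u y $ i - v $ i)))
      = (\<lambda>h. ((u y $ i) *\<^sub>R a
          + ((y - x) \<bullet> (u y - v)) *\<^sub>R grad (\<lambda>z. u z $ i) y - (u y $ i - v $ i) *\<^sub>R v
          - (v \<bullet> (y - x)) *\<^sub>R grad (\<lambda>z. u z $ i) y) \<bullet> h)"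
    by (rule ext) (simp add: inner_add_left inner_diff_left algebra_simps)
  ultimately have "((\<lambda>y. ((y - x) \<bullet> (u y - v)) * u y $ i - (v \<bullet> (y - x)) * (u y $ i - v $ i)) has_derivative
      (\<lambda>h. ((u y $ i) *\<^sub>R a
          + ((y - x) \<bullet> (u y - v)) *\<^sub>R grad (\<lambda>z. u z $ i) y - (u y $ i - v $ i) *\<^sub>R v
          - (v \<bullet> (y - x)) *\<^sub>R grad (\<lambda>z. u z $ i) y) \<bullet> h)) (at y)"
    by (rule has_derivative_eq_rhs)
  moreover have "(\<lambda>y. energy_flux u x v y $ i)
      = (\<lambda>y. ((y - x) \<bullet> (u y - v)) * u y $ i - (v \<bullet> (y - x)) * (u y $ i - v $ i))"
    by (simp add: energy_flux_def)
  ultimately show ?thesis unfolding a_def by (simp only:)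
qed

lemma C1_field_energy_flux: "C1_field \<Omega> (energy_flux u x v)"
proof (rule C1_fieldI[OF has_derivative_energy_flux])
  fix i
  have "continuous_on \<Omega> (grad (\<lambda>z. u z $ k))" for k
    by (rule C2_on_continuous_on_grad[OF velocity_C2])
  with continuous_on_velocity show "continuous_on \<Omega> (\<lambda>y.
      (u y $ i) *\<^sub>R (u y - v + (\<Sum>k\<in>UNIV. (y - x) $ k *\<^sub>R grad (\<lambda>z. u z $ k) y))
    + ((y - x) \<bullet> (u y - v)) *\<^sub>R grad (\<lambda>z. u z $ i) y - (u y $ i - v $ i) *\<^sub>R v
    - (v \<bullet> (y - x)) *\<^sub>R grad (\<lambda>z. u z $ i) y)"
    by (intro continuous_intros)
qed

lemma divergence_energy_flux:
  assumes "y \<in> \<Omega>"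
  shows "divergence (energy_flux u x v) y = (norm (u y - v))\<^sup>2 + (y - x) \<bullet> convective u y"
proof -
  note grad = grad_eq_of_has_derivative[OF has_derivative_energy_flux[OF assms]]
  have "partial 1 (\<lambda>z. u z $ 1) y + partial 2 (\<lambda>z. u z $ 2) y + partial 3 (\<lambda>z. u z $ 3) y = 0"
    using divergence_free[OF assms] by (simp add: divergence_def sum_3)
  then show ?thesis
    unfolding divergence_eq_sum_grad grad power2_norm_eq_inner
    apply (simp only: sum_3 vector_add_component vector_minus_component vector_scaleR_component
        inner_3 convective_def vec_lambda_beta grad_component real_scaleR_def)
    by algebra
qed


lemma sph_mean_pressure_has_derivative:
  assumes "ball x R \<subseteq> \<Omega>" "\<bar>s\<bar> < R"
  shows "((\<lambda>s. sph_mean p x s) has_real_derivative sphere_avg (\<lambda>\<xi>. \<xi> \<bullet> grad p (x + s *\<^sub>R \<xi>))) (at s)"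
proof -
  have "((\<lambda>s. sphere_avg (\<lambda>\<xi>. p (x + s *\<^sub>R \<xi>))) has_real_derivative
      sphere_avg (\<lambda>\<xi>. grad p (x + s *\<^sub>R \<xi>) \<bullet> \<xi>)) (at s)"
  proof (rule sphere_avg_radial_has_derivative[OF assms, where f="\<lambda>\<xi> y. p y" and Df="\<lambda>\<xi> y. grad p y"])
    fix y assume "y \<in> \<Omega>"
    then show "(p has_derivative (\<lambda>h. grad p y \<bullet> h)) (at y)"
      by (rule C2_on_has_derivative[OF open_domain pressure_C2])
  next
    show "continuous_on (sphere 0 1 \<times> \<Omega>) (\<lambda>(\<xi>, y). p y)"
      using continuous_on_Times_snd[OF C2_on_imp_continuous_on[OF pressure_C2]] by (simp add: split_beta)
    show "continuous_on (sphere 0 1 \<times> \<Omega>) (\<lambda>(\<xi>, y). grad p y)"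
      using continuous_on_Times_snd[OF C2_on_continuous_on_grad[OF pressure_C2]] by (simp add: split_beta)
  qed
  then show ?thesis by (simp add: sph_mean_def inner_commute)
qed

lemma mean_normal_energy_differentiable:
  assumes "ball x R \<subseteq> \<Omega>" "\<bar>s\<bar> < R"
  shows "mean_normal_energy u x v differentiable (at s)"
proof -
  define D where "D = (\<lambda>\<xi> y. (2 * (\<xi> \<bullet> (u y - v))) *\<^sub>R (\<Sum>k\<in>UNIV. \<xi> $ k *\<^sub>R grad (\<lambda>z. u z $ k) y))"
  have "((\<lambda>s. sphere_avg (\<lambda>\<xi>. (\<xi> \<bullet> (u (x + s *\<^sub>R \<xi>) - v))\<^sup>2)) has_real_derivative
      sphere_avg (\<lambda>\<xi>. D \<xi> (x + s *\<^sub>R \<xi>) \<bullet> \<xi>)) (at s)"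
  proof (rule sphere_avg_radial_has_derivative[OF assms, where f="\<lambda>\<xi> y. (\<xi> \<bullet> (u y - v))\<^sup>2" and Df=D])
    fix \<xi> y :: "real^3" assume "y \<in> \<Omega>"
    have "((\<lambda>y. \<Sum>k\<in>UNIV. \<xi> $ k * (u y $ k - v $ k)) has_derivative
        (\<lambda>h. \<Sum>k\<in>UNIV. \<xi> $ k * (grad (\<lambda>z. u z $ k) y \<bullet> h - 0))) (at y)"
      by (intro has_derivative_sum has_derivative_mult_right has_derivative_diff
          velocity_has_derivative \<open>y \<in> \<Omega>\<close> has_derivative_const)
    moreover have "(\<lambda>y. \<xi> \<bullet> (u y - v)) = (\<lambda>y. \<Sum>k\<in>UNIV. \<xi> $ k * (u y $ k - v $ k))"
      by (simp add: inner_vec_def)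
    ultimately have "((\<lambda>y. \<xi> \<bullet> (u y - v)) has_derivative
        (\<lambda>h. (\<Sum>k\<in>UNIV. \<xi> $ k *\<^sub>R grad (\<lambda>z. u z $ k) y) \<bullet> h)) (at y)"
      by (simp add: inner_sum_left)
    from has_derivative_mult[OF this this]
    show "((\<lambda>y. (\<xi> \<bullet> (u y - v))\<^sup>2) has_derivative (\<lambda>h. D \<xi> y \<bullet> h)) (at y)"
      unfolding D_def power2_eq_square by (simp add: algebra_simps)
  next
    have "continuous_on (sphere 0 1 \<times> \<Omega>) (\<lambda>z. u (snd z))"
      by (rule continuous_on_Times_snd[OF continuous_on_velocity])
    then show "continuous_on (sphere 0 1 \<times> \<Omega>) (\<lambda>(\<xi>, y). (\<xi> \<bullet> (u y - v))\<^sup>2)"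
      unfolding split_beta by (intro continuous_intros)
  next
    have "continuous_on (sphere 0 1 \<times> \<Omega>) (\<lambda>z. grad (\<lambda>y. u y $ k) (snd z))" for k
      by (rule continuous_on_Times_snd[OF C2_on_continuous_on_grad[OF velocity_C2]])
    moreover have "continuous_on (sphere 0 1 \<times> \<Omega>) (\<lambda>z. u (snd z))"
      by (rule continuous_on_Times_snd[OF continuous_on_velocity])
    ultimately show "continuous_on (sphere 0 1 \<times> \<Omega>) (\<lambda>(\<xi>, y). D \<xi> y)"
      unfolding split_beta D_def by (intro continuous_intros)
  qed
  then show ?thesis
    unfolding mean_normal_energy_def real_differentiable_def by blast
qed

lemma mean_normal_energy_flux_has_derivative:
  assumes ball: "ball x R \<subseteq> \<Omega>" and s: "\<bar>s\<bar> < R"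
  shows "((\<lambda>s. s ^ 3 * mean_normal_energy u x v s) has_real_derivative
           s\<^sup>2 * (mean_energy u x v s + s * mean_normal_convection u x s)) (at s)"
proof -
  have inS: "\<And>\<xi>. \<xi> \<in> sphere 0 1 \<Longrightarrow> x + s *\<^sub>R \<xi> \<in> \<Omega>"
    using sphere_point_mem[OF ball s] .
  have "t\<^sup>2 * sphere_avg (\<lambda>\<xi>. \<xi> \<bullet> energy_flux u x v (x + t *\<^sub>R \<xi>))
      = t ^ 3 * mean_normal_energy u x v t" for t
    by (simp add: inner_energy_flux_sphere sphere_avg_cmult mean_normal_energy_def power2_eq_square
        power3_eq_cube mult.assoc)
  moreover have "sphere_avg (\<lambda>\<xi>. divergence (energy_flux u x v) (x + s *\<^sub>R \<xi>))
      = sphere_avg (\<lambda>\<xi>. (norm (u (x + s *\<^sub>R \<xi>) - v))\<^sup>2 + s * (\<xi> \<bullet> convective u (x + s *\<^sub>R \<xi>)))"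
    by (rule sphere_avg_cong) (simp add: divergence_energy_flux inS)
  moreover have "\<dots> = mean_energy u x v s + s * mean_normal_convection u x s"
    unfolding mean_energy_def mean_normal_convection_def sphere_avg_cmult[symmetric]
    using continuous_on_sphere_shell[OF continuous_on_velocity inS]
      continuous_on_sphere_shell[OF C1_field.continuous_on_field[OF C1_field_convective] inS]
    by (intro sphere_avg_add) (auto intro!: continuous_intros)
  ultimately show ?thesis
    using C1_field.flux_has_derivative[OF C1_field_energy_flux[of x v] ball s] by simp
qed

lemma mean_normal_energy_has_derivative:
  assumes ball: "ball x R \<subseteq> \<Omega>" and s: "\<bar>s\<bar> < R" "s \<noteq> 0"
  shows "(mean_normal_energy u x v has_real_derivative
           (mean_energy u x v s - 3 * mean_normal_energy u x v s) / s + mean_normal_convection u x s) (at s)"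
proof -
  obtain A' where A': "(mean_normal_energy u x v has_real_derivative A') (at s)"
    using mean_normal_energy_differentiable[OF ball s(1)] unfolding real_differentiable_def by blast
  have "((\<lambda>s. s ^ 3 * mean_normal_energy u x v s) has_real_derivative
      3 * s\<^sup>2 * mean_normal_energy u x v s + s ^ 3 * A') (at s)"
    by (auto intro!: derivative_eq_intros A')
  from DERIV_unique[OF this mean_normal_energy_flux_has_derivative[OF ball s(1)]]
  have "s\<^sup>2 * (A' * s + 3 * mean_normal_energy u x v s)
      = s\<^sup>2 * (mean_energy u x v s + s * mean_normal_convection u x s)"
    by (simp add: power2_eq_square power3_eq_cube algebra_simps)
  then have "A' * s + 3 * mean_normal_energy u x v s = mean_energy u x v s + s * mean_normal_convection u x s"
    using s(2) by simp
  then have "A' = (mean_energy u x v s - 3 * mean_normal_energy u x v s) / s + mean_normal_convection u x s"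
    using s(2) by (simp add: field_simps)
  with A' show ?thesis by simp
qed

lemma sphere_avg_energy_anisotropy:
  assumes ball: "ball x R \<subseteq> \<Omega>" and s: "\<bar>s\<bar> < R"
  shows "sphere_avg (\<lambda>\<xi>. 3 * (\<xi> \<bullet> (u (x + s *\<^sub>R \<xi>) - v))\<^sup>2 - (norm (u (x + s *\<^sub>R \<xi>) - v))\<^sup>2)
           = 3 * mean_normal_energy u x v s - mean_energy u x v s"
proof -
  have cu: "continuous_on (sphere 0 1) (\<lambda>\<xi>. u (x + s *\<^sub>R \<xi>))"
    by (rule continuous_on_sphere_shell[OF continuous_on_velocity sphere_point_mem[OF ball s]])
  have "continuous_on (sphere 0 1) (\<lambda>\<xi>. 3 * (\<xi> \<bullet> (u (x + s *\<^sub>R \<xi>) - v))\<^sup>2)"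
    using cu by (intro continuous_intros)
  moreover have "continuous_on (sphere 0 1) (\<lambda>\<xi>. (norm (u (x + s *\<^sub>R \<xi>) - v))\<^sup>2)"
    using cu by (intro continuous_intros)
  ultimately show ?thesis
    unfolding mean_normal_energy_def mean_energy_def sphere_avg_cmult[symmetric]
    by (rule sphere_avg_diff)
qed

lemma pressure_normal_energy_has_derivative:
  assumes ball: "ball x R \<subseteq> \<Omega>" and s: "\<bar>s\<bar> < R" "s \<noteq> 0"
  shows "((\<lambda>s. sph_mean p x s + mean_normal_energy u x v s) has_real_derivative
           (mean_energy u x v s - 3 * mean_normal_energy u x v s) / s) (at s)"
proof -
  have "((\<lambda>s. sph_mean p x s + mean_normal_energy u x v s) has_real_derivative
      - mean_normal_convection u x s
      + ((mean_energy u x v s - 3 * mean_normal_energy u x v s) / s + mean_normal_convection u x s)) (at s)"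
    unfolding sphere_avg_normal_grad_pressure[OF ball s, symmetric]
    by (intro DERIV_add sph_mean_pressure_has_derivative[OF ball s(1)]
        mean_normal_energy_has_derivative[OF ball s])
  then show ?thesis by simp
qed

lemma isCont_pressure_normal_energy:
  assumes ball: "ball x R \<subseteq> \<Omega>" and s: "\<bar>s\<bar> < R"
  shows "isCont (\<lambda>s. sph_mean p x s + mean_normal_energy u x v s) s"
proof -
  obtain A' where "(mean_normal_energy u x v has_real_derivative A') (at s)"
    using mean_normal_energy_differentiable[OF ball s] unfolding real_differentiable_def by blast
  with sph_mean_pressure_has_derivative[OF ball s] show ?thesis
    by (intro continuous_intros DERIV_isCont)
qed

lemma pressure_energy_identity:
  assumes ball: "ball x R \<subseteq> \<Omega>" and r: "0 < r" "r < R"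
  shows "p x + (1/3) * (norm (u x - v))\<^sup>2 =
           sph_mean p x r
         + sphere_avg (\<lambda>\<xi>. (\<xi> \<bullet> (u (x + r *\<^sub>R \<xi>) - v))\<^sup>2)
         + integral {0..r} (\<lambda>\<rho>. (1/\<rho>) * sphere_avg (\<lambda>\<xi>.
              3 * (\<xi> \<bullet> (u (x + \<rho> *\<^sub>R \<xi>) - v))\<^sup>2 - (norm (u (x + \<rho> *\<^sub>R \<xi>) - v))\<^sup>2))"
    (is "_ = _ + _ + integral _ ?f")
proof -
  define E where "E = (\<lambda>s. - (sph_mean p x s + mean_normal_energy u x v s))"
  have "(E has_real_derivative ?f s) (at s)" if "s \<in> {0<..<r}" for s
  proof -
    have s: "\<bar>s\<bar> < R" "s \<noteq> 0" using that r by auto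
    from DERIV_minus[OF pressure_normal_energy_has_derivative[OF ball s]]
    show ?thesis
      unfolding E_def sphere_avg_energy_anisotropy[OF ball s(1)] by (simp add: diff_divide_distrib)
  qed
  moreover have "continuous_on {0..r} E"
  proof (rule continuous_at_imp_continuous_on, rule ballI)
    fix s assume "s \<in> {0..r}"
    then have "\<bar>s\<bar> < R" using r by auto
    from isCont_pressure_normal_energy[OF ball this] show "isCont E s"
      unfolding E_def by (rule continuous_minus)
  qed
  ultimately have "(?f has_integral E r - E 0) {0..r}"
    using r(1) by (intro fundamental_theorem_of_calculus_interior)
      (auto simp: has_real_derivative_iff_has_vector_derivative[symmetric])
  moreover have "E 0 = - (p x + (1/3) * (norm (u x - v))\<^sup>2)"
    by (simp add: E_def sph_mean_def mean_normal_energy_def sphere_avg_inner_square)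
  ultimately show ?thesis
    by (simp add: integral_unique E_def mean_normal_energy_def)
qed

end

lemma larger_ball_in_open:
  fixes x :: "'a::euclidean_space"
  assumes "open S" "cball x r \<subseteq> S" "0 \<le> r"
  obtains R where "r < R" "ball x R \<subseteq> S"
proof -
  obtain e where e: "e > 0" "(\<Union>y\<in>cball x r. ball y e) \<subseteq> S"
    using compact_subset_open_imp_ball_epsilon_subset[OF compact_cball assms(1,2)] by blast
  have "ball x (r + e) \<subseteq> S"
  proof
    fix z assume z: "z \<in> ball x (r + e)"
    define d where "d = dist x z"
    show "z \<in> S"
    proof (cases "d \<le> r")
      case True
      then show ?thesis using e by (force simp: d_def)
    next
      case False
      then have "d > 0" using assms(3) by simp
      define y where "y = x + (r / d) *\<^sub>R (z - x)"
      have nd: "norm (z - x) = d" by (simp add: d_def dist_norm norm_minus_commute)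
      have "dist x y = r" unfolding y_def dist_norm using \<open>d > 0\<close> assms(3) nd by simp
      moreover have "dist y z = d - r"
      proof -
        have "z - y = (1 - r / d) *\<^sub>R (z - x)" unfolding y_def by (simp add: algebra_simps)
        then have "dist y z = (1 - r / d) * d"
          using nd False \<open>d > 0\<close> by (simp add: dist_norm norm_minus_commute[of y z])
        also have "\<dots> = d - r" using \<open>d > 0\<close> by (simp add: field_simps)
        finally show ?thesis .
      qed
      ultimately show ?thesis using e z by (force simp: d_def)
    qed
  qed
  with e(1) show ?thesis using that[of "r + e"] by simp
qed

theorem lemma2:
  fixes \<Omega> :: "(real^3) set" and x v :: "real^3" and r :: real
    and u :: "real^3 \<Rightarrow> real^3" and p :: "real^3 \<Rightarrow> real"
  assumes "open \<Omega>" and "x \<in> \<Omega>" and "0 < r" and "cball x r \<subseteq> \<Omega>"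
    and "\<forall>k. C2_on \<Omega> (\<lambda>y. u y $ k)"
    and "\<forall>y\<in>\<Omega>. divergence u y = 0"
    and "C2_on \<Omega> p"
    and "\<forall>y\<in>\<Omega>. - laplacian p y = divergence (convective u) y"
  shows "p x + (1/3) * (norm (u x - v))\<^sup>2 =
           sph_mean p x r
         + sphere_avg (\<lambda>\<xi>. (\<xi> \<bullet> (u (x + r *\<^sub>R \<xi>) - v))\<^sup>2)
         + integral {0..r} (\<lambda>\<rho>. (1/\<rho>) * sphere_avg (\<lambda>\<xi>.
              3 * (\<xi> \<bullet> (u (x + \<rho> *\<^sub>R \<xi>) - v))\<^sup>2 - (norm (u (x + \<rho> *\<^sub>R \<xi>) - v))\<^sup>2))"
proof -
  obtain R where R: "r < R" "ball x R \<subseteq> \<Omega>"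
    using larger_ball_in_open[OF assms(1,4)] assms(3) by auto
  interpret pressure_poisson \<Omega> u p
    using assms(1,5-8) by unfold_locales auto
  show ?thesis by (rule pressure_energy_identity[OF R(2) assms(3) R(1)])
qed

end
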